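(* (FCN) Let $\bm{W}^\star\in\mathbb{R}^{d\times K}$ with $\|\bm{w}_k^\star\|_2\le1$ for all $k$. There is a constant $C_1$ such that for all $\bm{W}\in\mathbb{R}^{d\times K}$ with $\|\bm{W}-\bm{W}^\star\|_{\mathrm F}\le0.7$, $$\|\nabla^2f(\bm{W})-\nabla^2f(\bm{W}^\star)\|\le\frac{C_1}{K^{3/2}}\|\bm{W}-\bm{W}^\star\|_{\mathrm F}.$$ (CNN) Let $\bm{w}^\star\in\mathbb{R}^m$ with $\|\bm{w}^\star\|_2\le1$. There is a constant $C_2$ such that for all $\bm{w}$ with $\|\bm{w}-\bm{w}^\star\|_2\le0.7$, $$\|\nabla^2f(\bm{w})-\nabla^2f(\bm{w}^\star)\|\le C_2K\|\bm{w}-\bm{w}^\star\|_2.$$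
   Context: $\phi(x)=1/(1+e^{-x})$. FCN: $H(\bm{W},\bm{x})=\frac1K\sum_{k=1}^K\phi(\bm{w}_k^\top\bm{x})$ for $\bm{W}=[\bm{w}_1,\dots,\bm{w}_K]$. CNN: $d=mK$, $\bm{x}^{(k)}=(x_{m(k-1)+1},\dots,x_{mk})^\top$, $H(\bm{w},\bm{x})=\frac1K\sum_k\phi(\bm{w}^\top\bm{x}^{(k)})$. $(\bm{x},y)$: $\bm{x}\sim\mathcal{N}(\bm{0},\bm{I}_d)$, $y\in\{0,1\}$, $\mathbb{P}(y=1\mid\bm{x})=H(\bm{W}^\star,\bm{x})$ (resp. $H(\bm{w}^\star,\bm{x})$). Loss $\ell(\bm{W};\bm{x},y)=-y\log H(\bm{W},\bm{x})-(1-y)\log(1-H(\bm{W},\bm{x}))$; population risk $f(\bm{W})=\mathbb{E}[\ell(\bm{W};\bm{x},y)]$; Hessians are with respect to $\mathrm{vec}(\bm{W})\in\mathbb{R}^{dK}$ (resp. $\bm{w}$); $\|\cdot\|$ is the spectral norm. *)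

theory Defs
  imports "HOL-Probability.Probability"
begin

definition sigmoid :: "real \<Rightarrow> real" where
  "sigmoid t = 1 / (1 + exp (- t))"

definition gauss :: "nat \<Rightarrow> (nat \<Rightarrow> real) measure" where
  "gauss d = PiM {..<d} (\<lambda>_. density lborel std_normal_density)"

definition xent_loss :: "real \<Rightarrow> real \<Rightarrow> real" where
  "xent_loss h y = - y * ln h - (1 - y) * ln (1 - h)"

text \<open>Population risk: x ~ gauss d, y in {0,1} with P(y=1|x) = Hstar x.\<close>
definition pop_risk :: "nat \<Rightarrow> ((nat \<Rightarrow> real) \<Rightarrow> real) \<Rightarrow> ((nat \<Rightarrow> real) \<Rightarrow> real) \<Rightarrow> real" where
  "pop_risk d Hstar H = (\<integral>x. (Hstar x * xent_loss (H x) 1 + (1 - Hstar x) * xent_loss (H x) 0) \<partial>gauss d)"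

text \<open>FCN: W (i,k) is the i-th entry of w_k (i < d, k < K).\<close>
definition fcn_H :: "nat \<Rightarrow> nat \<Rightarrow> (nat \<times> nat \<Rightarrow> real) \<Rightarrow> (nat \<Rightarrow> real) \<Rightarrow> real" where
  "fcn_H d K W x = (1 / real K) * (\<Sum>k<K. sigmoid (\<Sum>i<d. W (i, k) * x i))"

definition fcn_risk :: "nat \<Rightarrow> nat \<Rightarrow> (nat \<times> nat \<Rightarrow> real) \<Rightarrow> (nat \<times> nat \<Rightarrow> real) \<Rightarrow> real" where
  "fcn_risk d K Wstar W = pop_risk d (fcn_H d K Wstar) (fcn_H d K W)"

text \<open>CNN: d = m*K, x^(k)_j = x (m*k + j) for j < m, k < K (0-indexed).\<close>
definition cnn_H :: "nat \<Rightarrow> nat \<Rightarrow> (nat \<Rightarrow> real) \<Rightarrow> (nat \<Rightarrow> real) \<Rightarrow> real" where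
  "cnn_H m K w x = (1 / real K) * (\<Sum>k<K. sigmoid (\<Sum>j<m. w j * x (m * k + j)))"

definition cnn_risk :: "nat \<Rightarrow> nat \<Rightarrow> (nat \<Rightarrow> real) \<Rightarrow> (nat \<Rightarrow> real) \<Rightarrow> real" where
  "cnn_risk m K wstar w = pop_risk (m * K) (cnn_H m K wstar) (cnn_H m K w)"

definition coord :: "'a \<Rightarrow> 'a \<Rightarrow> real" where
  "coord p = (\<lambda>q. if q = p then 1 else 0)"

definition hessian :: "(('a \<Rightarrow> real) \<Rightarrow> real) \<Rightarrow> ('a \<Rightarrow> real) \<Rightarrow> 'a \<Rightarrow> 'a \<Rightarrow> real" where
  "hessian f W p q =
     deriv (\<lambda>s. deriv (\<lambda>t. f (\<lambda>r. W r + s * coord q r + t * coord p r)) 0) 0"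

definition spec_norm :: "'a set \<Rightarrow> ('a \<Rightarrow> 'a \<Rightarrow> real) \<Rightarrow> real" where
  "spec_norm I A = Sup {sqrt (\<Sum>p\<in>I. (\<Sum>q\<in>I. A p q * v q)\<^sup>2) | v. (\<Sum>q\<in>I. (v q)\<^sup>2) = 1}"

end

theory Submission
  imports Defs
begin

text \<open>
  The Hessian of the population risk at \<open>W\<close> is the Gaussian expectation of the second directional
  derivative of \<open>xent a (H W x)\<close>, where \<open>a = H W\<^sup>\<star> x\<close>.  By the mean value theorem, its change
  between \<open>W\<^sup>\<star>\<close> and \<open>W\<close> is bounded by the third directional derivative along \<open>W - W\<^sup>\<star>\<close>.  That
  derivative is a sum of products of derivatives of the sigmoid (bounded), derivatives of the
  cross-entropy in the prediction \<open>h\<close> (bounded by powers of \<open>1/h + 1/(1-h)\<close>, which is at most the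
  average over the units of \<open>4 exp |w\<^sub>k \<bullet> x|\<close>) and linear forms \<open>w\<^sub>k \<bullet> x\<close>.  Gaussian linear forms
  have all exponential moments, so each expectation is bounded by a constant times averages over
  the units of products of the norms of their weight vectors.  For the fully connected network the
  units own disjoint blocks of \<open>W\<close>, and Cauchy-Schwarz over the units yields the factor \<open>K\<^sup>-\<^sup>3\<^sup>/\<^sup>2\<close>;
  for the convolutional network all units share the filter and the averages are bounded
  uniformly in \<open>K\<close>.
\<close>

section \<open>Gaussian moments of linear forms\<close>

definition dotp :: "nat \<Rightarrow> (nat \<Rightarrow> real) \<Rightarrow> (nat \<Rightarrow> real) \<Rightarrow> real" where
  "dotp d c x = (\<Sum>i<d. c i * x i)"

definition sq_norm :: "nat \<Rightarrow> (nat \<Rightarrow> real) \<Rightarrow> real" where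
  "sq_norm d c = (\<Sum>i<d. (c i)\<^sup>2)"

lemma sq_norm_nonneg [simp]: "0 \<le> sq_norm d c"
  unfolding sq_norm_def by (simp add: sum_nonneg)

lemma dotp_scale: "dotp d (\<lambda>i. a * c i) x = a * dotp d c x"
  unfolding dotp_def by (simp add: sum_distrib_left mult_ac)

lemma sq_norm_scale: "sq_norm d (\<lambda>i. a * c i) = a\<^sup>2 * sq_norm d c"
  unfolding sq_norm_def by (simp add: sum_distrib_left power_mult_distrib)

lemma dotp_add_scaled: "dotp d (\<lambda>i. c i + t * c' i) x = dotp d c x + t * dotp d c' x"
  unfolding dotp_def by (simp add: algebra_simps sum.distrib sum_distrib_left)

lemma dotp_eq_0_if_sq_norm_eq_0: "sq_norm d c = 0 \<Longrightarrow> dotp d c x = 0"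
  unfolding sq_norm_def dotp_def by (simp add: sum_nonneg_eq_0_iff)

definition unit_dir :: "nat \<Rightarrow> (nat \<Rightarrow> real) \<Rightarrow> nat \<Rightarrow> real" where
  "unit_dir d c = (\<lambda>i. (if sq_norm d c = 0 then 0 else 1 / sqrt (sq_norm d c)) * c i)"

lemma sq_norm_unit_dir_le: "sq_norm d (unit_dir d c) \<le> 1"
proof (cases "sq_norm d c = 0")
  case True
  then show ?thesis unfolding unit_dir_def sq_norm_scale by simp
next
  case False
  then have "0 < sq_norm d c" using sq_norm_nonneg[of d c] by linarith
  moreover have "sq_norm d (unit_dir d c) = (1 / sqrt (sq_norm d c))\<^sup>2 * sq_norm d c"
    unfolding unit_dir_def sq_norm_scale using False by simp
  ultimately show ?thesis by (simp add: power_divide)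
qed

lemma abs_dotp_unit_dir: "\<bar>dotp d c x\<bar> = sqrt (sq_norm d c) * \<bar>dotp d (unit_dir d c) x\<bar>"
proof (cases "sq_norm d c = 0")
  case True
  then show ?thesis by (simp add: dotp_eq_0_if_sq_norm_eq_0)
next
  case False
  then have "0 < sq_norm d c" using sq_norm_nonneg[of d c] by linarith
  then have "0 < sqrt (sq_norm d c)" by simp
  then show ?thesis unfolding unit_dir_def dotp_scale using False by (simp add: abs_mult)
qed

definition integrable_le :: "'a measure \<Rightarrow> ('a \<Rightarrow> real) \<Rightarrow> real \<Rightarrow> bool" where
  "integrable_le M f b \<longleftrightarrow> integrable M f \<and> (\<integral>x. f x \<partial>M) \<le> b"

lemma integrable_le_weaken: "integrable_le M f a \<Longrightarrow> a \<le> b \<Longrightarrow> integrable_le M f b"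
  unfolding integrable_le_def by auto

lemma integrable_le_add:
  "integrable_le M f a \<Longrightarrow> integrable_le M g b \<Longrightarrow> integrable_le M (\<lambda>x. f x + g x) (a + b)"
  unfolding integrable_le_def by auto

lemma integrable_le_cmult:
  "0 \<le> c \<Longrightarrow> integrable_le M f b \<Longrightarrow> integrable_le M (\<lambda>x. c * f x) (c * b)"
  unfolding integrable_le_def by (auto intro: mult_left_mono)

lemma integrable_le_sum:
  "finite J \<Longrightarrow> (\<And>j. j \<in> J \<Longrightarrow> integrable_le M (f j) (b j))
    \<Longrightarrow> integrable_le M (\<lambda>x. \<Sum>j\<in>J. f j x) (\<Sum>j\<in>J. b j)"
  by (induction J rule: finite_induct) (auto simp: integrable_le_def intro: add_mono)

lemma integrable_le_sum_list:
  "(\<And>u. u \<in> set us \<Longrightarrow> integrable_le M (f u) (b u))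
    \<Longrightarrow> integrable_le M (\<lambda>x. \<Sum>u\<leftarrow>us. f u x) (\<Sum>u\<leftarrow>us. b u)"
  by (induction us) (auto simp: integrable_le_def intro: add_mono)

lemma integrable_le_dominated:
  assumes "integrable_le M g b" "f \<in> borel_measurable M"
    and "\<And>x. x \<in> space M \<Longrightarrow> 0 \<le> f x" "\<And>x. x \<in> space M \<Longrightarrow> f x \<le> g x"
  shows "integrable_le M f b"
proof -
  have "integrable M f"
  proof (rule Bochner_Integration.integrable_bound[where f=g])
    show "integrable M g" using assms(1) by (simp add: integrable_le_def)
    have "norm (f x) \<le> norm (g x)" if "x \<in> space M" for x
      using assms(3,4)[OF that] by simp
    then show "AE x in M. norm (f x) \<le> norm (g x)" by (rule AE_I2)
  qed (rule assms(2))
  moreover have "(\<integral>x. f x \<partial>M) \<le> (\<integral>x. g x \<partial>M)"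
    using assms \<open>integrable M f\<close> by (intro integral_mono) (auto simp: integrable_le_def)
  ultimately show ?thesis using assms(1) by (auto simp: integrable_le_def)
qed

lemma borel_measurable_prod_list_map:
  fixes f :: "'a \<Rightarrow> 'b \<Rightarrow> real"
  shows "(\<And>u. u \<in> set us \<Longrightarrow> f u \<in> borel_measurable M) \<Longrightarrow> (\<lambda>x. \<Prod>u\<leftarrow>us. f u x) \<in> borel_measurable M"
  by (induction us) (auto intro!: borel_measurable_times)

lemma prob_space_gauss: "prob_space (gauss d)"
  unfolding gauss_def using real_dist_normal_dist
  by (intro prob_space_PiM) (simp add: real_distribution_def)

lemma sets_gauss: "sets (gauss d) = sets (PiM {..<d} (\<lambda>_. borel))"
  unfolding gauss_def by (intro sets_PiM_cong) auto

lemma measurable_dotp [measurable]: "dotp d c \<in> borel_measurable (gauss d)"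
  unfolding dotp_def by (subst measurable_cong_sets[OF sets_gauss refl]) measurable

lemma std_normal_mgf:
  "has_bochner_integral std_normal_distribution (\<lambda>t. exp (c * t)) (exp (c\<^sup>2 / 2))"
proof -
  have completed_square:
    "std_normal_density t * exp (c * t) = exp (c\<^sup>2 / 2) * normal_density c 1 t" for t
    by (simp add: normal_density_def exp_add[symmetric] power2_eq_square field_simps)
  have "has_bochner_integral lborel (\<lambda>t. std_normal_density t * exp (c * t)) (exp (c\<^sup>2 / 2))"
    unfolding completed_square has_bochner_integral_iff by simp
  then show ?thesis by (simp add: has_bochner_integral_density)
qed

lemma gauss_mgf: "has_bochner_integral (gauss d) (\<lambda>x. exp (dotp d c x)) (exp (sq_norm d c / 2))"
proof -
  interpret product_sigma_finite "\<lambda>_::nat. std_normal_distribution"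
    unfolding product_sigma_finite_def using real_dist_normal_dist
    by (simp add: real_distribution_def prob_space_imp_sigma_finite)
  have exp_dotp: "(\<lambda>x. exp (dotp d c x)) = (\<lambda>x. \<Prod>i<d. exp (c i * x i))"
    unfolding dotp_def by (simp add: exp_sum)
  have exp_sq_norm: "exp (sq_norm d c / 2) = (\<Prod>i<d. exp ((c i)\<^sup>2 / 2))"
    unfolding sq_norm_def by (simp add: exp_sum[symmetric] sum_divide_distrib)
  have "integrable (gauss d) (\<lambda>x. \<Prod>i<d. exp (c i * x i))"
    unfolding gauss_def
    by (rule product_integrable_prod) (auto intro: integrable.intros[OF std_normal_mgf])
  moreover have "(\<integral>x. (\<Prod>i<d. exp (c i * x i)) \<partial>gauss d) = (\<Prod>i<d. exp ((c i)\<^sup>2 / 2))"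
    unfolding gauss_def
    by (subst product_integral_prod) (use std_normal_mgf in \<open>auto simp: has_bochner_integral_iff\<close>)
  ultimately show ?thesis unfolding exp_dotp exp_sq_norm has_bochner_integral_iff by blast
qed

lemma gauss_exp_abs_dotp:
  assumes "0 \<le> \<beta>"
  shows "integrable_le (gauss d) (\<lambda>x. exp (\<beta> * \<bar>dotp d c x\<bar>)) (2 * exp (\<beta>\<^sup>2 * sq_norm d c / 2))"
proof (rule integrable_le_dominated)
  let ?g = "\<lambda>x. exp (dotp d (\<lambda>i. \<beta> * c i) x) + exp (dotp d (\<lambda>i. - \<beta> * c i) x)"
  show "integrable_le (gauss d) ?g (2 * exp (\<beta>\<^sup>2 * sq_norm d c / 2))"
    using gauss_mgf[of d "\<lambda>i. \<beta> * c i"] gauss_mgf[of d "\<lambda>i. - \<beta> * c i"]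
      sq_norm_scale[of d "- \<beta>" c, simplified]
    by (auto simp: integrable_le_def has_bochner_integral_iff sq_norm_scale)
  show "exp (\<beta> * \<bar>dotp d c x\<bar>) \<le> ?g x" for x
    unfolding dotp_scale by (cases "dotp d c x \<ge> 0") (auto simp: add_increasing add_increasing2)
qed auto

lemma power_le_fact_mult_exp:
  fixes s :: real
  assumes "0 \<le> s"
  shows "s ^ n \<le> fact n * exp s"
proof -
  have "summable (\<lambda>m. s ^ m / fact m)" and "exp s = (\<Sum>m. s ^ m / fact m)"
    using exp_converges[of s] by (auto simp: sums_iff divide_inverse_commute)
  then have "s ^ n / fact n \<le> exp s"
    using sum_le_suminf[of "\<lambda>m. s ^ m / fact m" "{n}"] assms by simp
  then show ?thesis by (simp add: divide_le_eq mult.commute)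
qed

lemma gauss_abs_dotp_power:
  "integrable_le (gauss d) (\<lambda>x. \<bar>dotp d c x\<bar> ^ n) (fact n * (2 * exp (sq_norm d c / 2)))"
proof (rule integrable_le_dominated)
  show "integrable_le (gauss d) (\<lambda>x. fact n * exp \<bar>dotp d c x\<bar>) (fact n * (2 * exp (sq_norm d c / 2)))"
    using gauss_exp_abs_dotp[of 1 d c] by (intro integrable_le_cmult) auto
qed (auto intro: power_le_fact_mult_exp)

lemma prod_list_le_power:
  fixes xs :: "real list"
  assumes "\<And>x. x \<in> set xs \<Longrightarrow> 0 \<le> x \<and> x \<le> m"
  shows "prod_list xs \<le> m ^ length xs"
  using assms
proof (induction xs)
  case (Cons a xs)
  then have "0 \<le> a" "a \<le> m" "prod_list xs \<le> m ^ length xs" "0 \<le> prod_list xs"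
    by (auto intro: prod_list_nonneg)
  then show ?case by (simp add: mult_mono)
qed simp

lemma prod_list_le_1_plus_sum_powers:
  fixes xs :: "real list"
  assumes "\<And>x. x \<in> set xs \<Longrightarrow> 0 \<le> x"
  shows "prod_list xs \<le> 1 + (\<Sum>x\<leftarrow>xs. x ^ length xs)"
proof -
  define m where "m = Max (insert 0 (set xs))"
  have "prod_list xs \<le> m ^ length xs"
    by (rule prod_list_le_power) (use assms in \<open>auto simp: m_def\<close>)
  also have "\<dots> \<le> 1 + (\<Sum>x\<leftarrow>xs. x ^ length xs)"
  proof -
    have sum_nonneg: "0 \<le> (\<Sum>x\<leftarrow>xs. x ^ length xs)"
      using assms by (intro sum_list_nonneg) auto
    have "m \<in> insert 0 (set xs)" unfolding m_def by (rule Max_in) auto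
    then consider "m = 0" | "m \<in> set xs" by blast
    then show ?thesis
    proof cases
      case 1
      then have "m ^ length xs \<le> 1" by (simp add: power_0_left)
      with sum_nonneg show ?thesis by linarith
    next
      case 2
      then have "m ^ length xs \<le> (\<Sum>x\<leftarrow>xs. x ^ length xs)"
        using assms by (intro member_le_sum_list) auto
      with sum_nonneg show ?thesis by linarith
    qed
  qed
  finally show ?thesis .
qed

definition moment_const :: "real \<Rightarrow> real \<Rightarrow> nat \<Rightarrow> nat \<Rightarrow> real" where
  "moment_const \<beta> R ne na = 1 + real ne * (2 * exp ((real (ne + na))\<^sup>2 * \<beta>\<^sup>2 * R / 2))
      + real na * (fact (ne + na) * (2 * exp (1 / 2)))"

lemma moment_const_nonneg: "0 \<le> moment_const \<beta> R ne na"
  unfolding moment_const_def by (auto intro!: add_nonneg_nonneg mult_nonneg_nonneg)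

lemma prod_list_abs_dotp:
  "(\<Prod>a\<leftarrow>as. \<bar>dotp d a x\<bar>) = (\<Prod>a\<leftarrow>as. sqrt (sq_norm d a)) * (\<Prod>a\<leftarrow>as. \<bar>dotp d (unit_dir d a) x\<bar>)"
proof (induction as)
  case (Cons a as)
  have "(\<Prod>b\<leftarrow>a # as. \<bar>dotp d b x\<bar>)
      = (sqrt (sq_norm d a) * \<bar>dotp d (unit_dir d a) x\<bar>)
        * ((\<Prod>b\<leftarrow>as. sqrt (sq_norm d b)) * (\<Prod>b\<leftarrow>as. \<bar>dotp d (unit_dir d b) x\<bar>))"
    by (simp only: list.map prod_list.Cons Cons.IH abs_dotp_unit_dir[of d a x])
  then show ?case by (simp only: list.map prod_list.Cons mult_ac)
qed simp

lemma gauss_moment_dominating_bound: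
  assumes "0 \<le> \<beta>" and us: "\<And>u. u \<in> set us \<Longrightarrow> sq_norm d u \<le> R" and n: "n = length us + length as"
  shows "integrable_le (gauss d)
      (\<lambda>x. 1 + (\<Sum>u\<leftarrow>us. exp (real n * (\<beta> * \<bar>dotp d u x\<bar>))) + (\<Sum>a\<leftarrow>as. \<bar>dotp d (unit_dir d a) x\<bar> ^ n))
      (moment_const \<beta> R (length us) (length as))"
proof -
  interpret prob_space "gauss d" by (rule prob_space_gauss)
  have exp_terms: "integrable_le (gauss d) (\<lambda>x. exp (real n * (\<beta> * \<bar>dotp d u x\<bar>)))
      (2 * exp ((real n)\<^sup>2 * \<beta>\<^sup>2 * R / 2))" if "u \<in> set us" for u
  proof -
    have "(real n * \<beta>)\<^sup>2 * sq_norm d u \<le> (real n)\<^sup>2 * \<beta>\<^sup>2 * R"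
      using us[OF that] by (simp add: power_mult_distrib mult_left_mono)
    then have "2 * exp ((real n * \<beta>)\<^sup>2 * sq_norm d u / 2) \<le> 2 * exp ((real n)\<^sup>2 * \<beta>\<^sup>2 * R / 2)"
      by simp
    moreover have "integrable_le (gauss d) (\<lambda>x. exp (real n * \<beta> * \<bar>dotp d u x\<bar>))
        (2 * exp ((real n * \<beta>)\<^sup>2 * sq_norm d u / 2))"
      using assms(1) by (intro gauss_exp_abs_dotp) simp
    ultimately show ?thesis by (simp add: mult.assoc integrable_le_weaken)
  qed
  have power_terms: "integrable_le (gauss d) (\<lambda>x. \<bar>dotp d (unit_dir d a) x\<bar> ^ n)
      (fact n * (2 * exp (1 / 2)))" for a
  proof (rule integrable_le_weaken)
    show "fact n * (2 * exp (sq_norm d (unit_dir d a) / 2)) \<le> fact n * (2 * exp (1 / 2))"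
      using sq_norm_unit_dir_le[of d a] by simp
  qed (rule gauss_abs_dotp_power)
  have "integrable_le (gauss d)
      (\<lambda>x. 1 + (\<Sum>u\<leftarrow>us. exp (real n * (\<beta> * \<bar>dotp d u x\<bar>))) + (\<Sum>a\<leftarrow>as. \<bar>dotp d (unit_dir d a) x\<bar> ^ n))
      (1 + (\<Sum>u\<leftarrow>us. 2 * exp ((real n)\<^sup>2 * \<beta>\<^sup>2 * R / 2)) + (\<Sum>a\<leftarrow>as. fact n * (2 * exp (1 / 2))))"
  proof (intro integrable_le_add integrable_le_sum_list)
    show "integrable_le (gauss d) (\<lambda>x. 1) 1" by (simp add: integrable_le_def prob_space)
  qed (use exp_terms power_terms in auto)
  then show ?thesis unfolding moment_const_def n by (simp add: sum_list_triv)
qed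

text \<open>Bounding a product of \<open>n\<close> factors by the sum of their \<open>n\<close>-th powers (a crude substitute
  for Hoelder's inequality) reduces it to moments of single linear forms.\<close>

lemma gauss_moment_bound:
  assumes "0 \<le> \<beta>" and "\<And>u. u \<in> set us \<Longrightarrow> sq_norm d u \<le> R"
  shows "integrable_le (gauss d)
      (\<lambda>x. (\<Prod>u\<leftarrow>us. exp (\<beta> * \<bar>dotp d u x\<bar>)) * (\<Prod>a\<leftarrow>as. \<bar>dotp d a x\<bar>))
      (moment_const \<beta> R (length us) (length as) * (\<Prod>a\<leftarrow>as. sqrt (sq_norm d a)))"
proof -
  define n where "n = length us + length as"
  define F where "F x = (\<Prod>u\<leftarrow>us. exp (\<beta> * \<bar>dotp d u x\<bar>)) * (\<Prod>a\<leftarrow>as. \<bar>dotp d (unit_dir d a) x\<bar>)" for x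
  have F_le: "F x \<le> 1 + (\<Sum>u\<leftarrow>us. exp (real n * (\<beta> * \<bar>dotp d u x\<bar>))) + (\<Sum>a\<leftarrow>as. \<bar>dotp d (unit_dir d a) x\<bar> ^ n)"
    for x
  proof -
    let ?xs = "map (\<lambda>u. exp (\<beta> * \<bar>dotp d u x\<bar>)) us @ map (\<lambda>a. \<bar>dotp d (unit_dir d a) x\<bar>) as"
    have "F x = prod_list ?xs" unfolding F_def by simp
    also have "\<dots> \<le> 1 + (\<Sum>y\<leftarrow>?xs. y ^ n)"
      using prod_list_le_1_plus_sum_powers[of ?xs] unfolding n_def by fastforce
    also have "\<dots> = 1 + (\<Sum>u\<leftarrow>us. exp (real n * (\<beta> * \<bar>dotp d u x\<bar>))) + (\<Sum>a\<leftarrow>as. \<bar>dotp d (unit_dir d a) x\<bar> ^ n)"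
      by (simp add: exp_of_nat_mult o_def)
    finally show ?thesis .
  qed
  have F_measurable: "F \<in> borel_measurable (gauss d)"
    unfolding F_def[abs_def] by (intro borel_measurable_times borel_measurable_prod_list_map) auto
  have F_nonneg: "0 \<le> F x" for x
    unfolding F_def by (auto intro!: mult_nonneg_nonneg prod_list_nonneg)
  have "integrable_le (gauss d) F (moment_const \<beta> R (length us) (length as))"
    by (rule integrable_le_dominated[OF gauss_moment_dominating_bound[OF assms n_def] F_measurable F_nonneg F_le])
  then have "integrable_le (gauss d) (\<lambda>x. (\<Prod>a\<leftarrow>as. sqrt (sq_norm d a)) * F x)
      ((\<Prod>a\<leftarrow>as. sqrt (sq_norm d a)) * moment_const \<beta> R (length us) (length as))"
    by (intro integrable_le_cmult prod_list_nonneg) auto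
  moreover have "(\<Prod>u\<leftarrow>us. exp (\<beta> * \<bar>dotp d u x\<bar>)) * (\<Prod>a\<leftarrow>as. \<bar>dotp d a x\<bar>)
      = (\<Prod>a\<leftarrow>as. sqrt (sq_norm d a)) * F x" for x
    unfolding F_def prod_list_abs_dotp[where as=as] by (simp only: mult_ac)
  ultimately show ?thesis
    by (simp only: mult.commute[of "moment_const \<beta> R (length us) (length as)"])
qed

section \<open>Calculus and convexity\<close>

lemma abs_diff_le_deriv_bound:
  fixes f f' :: "real \<Rightarrow> real"
  assumes "\<And>s. \<bar>s\<bar> \<le> \<bar>t\<bar> \<Longrightarrow> (f has_real_derivative f' s) (at s)"
    and "\<And>s. \<bar>s\<bar> \<le> \<bar>t\<bar> \<Longrightarrow> \<bar>f' s\<bar> \<le> B"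
  shows "\<bar>f t - f 0\<bar> \<le> B * \<bar>t\<bar>"
proof -
  consider "t = 0" | "0 < t" | "t < 0" by linarith
  then show ?thesis
  proof cases
    case 2
    then obtain z where z: "0 < z" "z < t" "f t - f 0 = (t - 0) * f' z"
      using MVT2[of 0 t f f'] assms(1) by auto
    then show ?thesis using assms(2)[of z] by (simp add: abs_mult mult.commute mult_left_mono)
  next
    case 3
    then obtain z where z: "t < z" "z < 0" "f 0 - f t = (0 - t) * f' z"
      using MVT2[of t 0 f f'] assms(1) by auto
    then have "\<bar>f t - f 0\<bar> = \<bar>t\<bar> * \<bar>f' z\<bar>" by (simp add: abs_mult abs_minus_commute)
    then show ?thesis using assms(2)[of z] z by (simp add: mult.commute mult_left_mono)
  qed simp
qed

lemma has_real_derivative_integral: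
  fixes F F' :: "real \<Rightarrow> 'a \<Rightarrow> real"
  assumes int: "\<And>t. \<bar>t\<bar> < 1 \<Longrightarrow> integrable M (F t)"
    and meas: "F' 0 \<in> borel_measurable M"
    and G: "integrable M G"
    and der: "\<And>t x. \<bar>t\<bar> < 1 \<Longrightarrow> x \<in> space M \<Longrightarrow> ((\<lambda>t. F t x) has_real_derivative F' t x) (at t)"
    and bnd: "\<And>t x. \<bar>t\<bar> < 1 \<Longrightarrow> x \<in> space M \<Longrightarrow> \<bar>F' t x\<bar> \<le> G x"
  shows "((\<lambda>t. \<integral>x. F t x \<partial>M) has_real_derivative (\<integral>x. F' 0 x \<partial>M)) (at 0)"
  unfolding has_field_derivative_iff tendsto_at_iff_sequentially
proof (intro allI impI)
  fix X :: "nat \<Rightarrow> real" assume X: "\<forall>i. X i \<in> UNIV - {0}" "X \<longlonglongrightarrow> 0"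
  then obtain N where N: "\<And>n. n \<ge> N \<Longrightarrow> \<bar>X n\<bar> < 1"
    using LIMSEQ_D[of X 0 1] by auto
  have quotient: "((\<lambda>y. ((\<integral>x. F y x \<partial>M) - (\<integral>x. F 0 x \<partial>M)) / (y - 0)) \<circ> X) (n + N) =
      (\<integral>x. (F (X (n + N)) x - F 0 x) / X (n + N) \<partial>M)" for n
    using int[of "X (n + N)"] int[of 0] N[of "n + N"] by simp
  show "((\<lambda>y. ((\<integral>x. F y x \<partial>M) - (\<integral>x. F 0 x \<partial>M)) / (y - 0)) \<circ> X) \<longlonglongrightarrow> (\<integral>x. F' 0 x \<partial>M)"
  proof (rule LIMSEQ_offset[where k=N], unfold quotient, rule integral_dominated_convergence[where w=G])
    show "(\<lambda>x. (F (X (n + N)) x - F 0 x) / X (n + N)) \<in> borel_measurable M" for n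
      using int[of "X (n + N)"] int[of 0] N[of "n + N"] by auto
    show "AE x in M. (\<lambda>n. (F (X (n + N)) x - F 0 x) / X (n + N)) \<longlonglongrightarrow> F' 0 x"
    proof (rule AE_I2)
      fix x assume x: "x \<in> space M"
      have "((\<lambda>y. (F y x - F 0 x) / (y - 0)) \<longlongrightarrow> F' 0 x) (at 0)"
        using der[of 0 x] x unfolding has_field_derivative_iff by simp
      then have "((\<lambda>y. (F y x - F 0 x) / (y - 0)) \<circ> (\<lambda>n. X (n + N))) \<longlonglongrightarrow> F' 0 x"
        unfolding tendsto_at_iff_sequentially using X LIMSEQ_ignore_initial_segment[OF X(2), of N]
        by auto
      then show "(\<lambda>n. (F (X (n + N)) x - F 0 x) / X (n + N)) \<longlonglongrightarrow> F' 0 x"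
        by (simp add: comp_def)
    qed
    show "AE x in M. norm ((F (X (n + N)) x - F 0 x) / X (n + N)) \<le> G x" for n
    proof (rule AE_I2)
      fix x assume x: "x \<in> space M"
      have small: "\<bar>X (n + N)\<bar> < 1" using N by simp
      have "\<bar>F (X (n + N)) x - F 0 x\<bar> \<le> G x * \<bar>X (n + N)\<bar>"
        by (rule abs_diff_le_deriv_bound[where f'="\<lambda>s. F' s x"]) (use small x der bnd in auto)
      moreover have "X (n + N) \<noteq> 0" using X by auto
      ultimately show "norm ((F (X (n + N)) x - F 0 x) / X (n + N)) \<le> G x"
        by (simp add: divide_le_eq abs_divide)
    qed
  qed (use meas G in auto)
qed

lemma power_mean_le_mean_power:
  fixes y :: "nat \<Rightarrow> real"
  assumes "0 < K" "\<And>j. 0 \<le> y j"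
  shows "((1 / real K) * (\<Sum>j<K. y j)) ^ m \<le> (1 / real K) * (\<Sum>j<K. y j ^ m)"
proof -
  have convex: "convex_on {0..} (\<lambda>x::real. x ^ m)"
    using convex_power_even[of m] convex_power_odd[of m] convex_on_subset by (cases "even m") blast+
  have "(\<lambda>x. x ^ m) (\<Sum>j\<in>{..<K}. (1 / real K) *\<^sub>R y j) \<le> (\<Sum>j\<in>{..<K}. (1 / real K) * (\<lambda>x. x ^ m) (y j))"
    by (rule convex_on_sum[OF _ _ convex]) (use assms in auto)
  then show ?thesis by (simp add: sum_distrib_left)
qed

lemma inverse_mean_le_mean_inverse:
  fixes y :: "nat \<Rightarrow> real"
  assumes "0 < K" "\<And>j. 0 < y j"
  shows "1 / ((1 / real K) * (\<Sum>j<K. y j)) \<le> (1 / real K) * (\<Sum>j<K. 1 / y j)"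
proof -
  have convex: "convex_on {0<..} (inverse :: real \<Rightarrow> real)" by (rule convex_on_inverse) auto
  have "inverse (\<Sum>j\<in>{..<K}. (1 / real K) *\<^sub>R y j) \<le> (\<Sum>j\<in>{..<K}. (1 / real K) * inverse (y j))"
    by (rule convex_on_sum[OF _ _ convex]) (use assms in auto)
  then show ?thesis by (simp add: sum_distrib_left inverse_eq_divide)
qed

section \<open>The sigmoid and the cross-entropy\<close>

lemma sigmoid_pos: "0 < sigmoid t"
  unfolding sigmoid_def by (simp add: add_pos_pos)

lemma sigmoid_less_1: "sigmoid t < 1"
  unfolding sigmoid_def by (simp add: divide_less_eq add_pos_pos)

lemma inverse_sigmoid: "1 / sigmoid t = 1 + exp (- t)"
  unfolding sigmoid_def by simp

lemma inverse_one_minus_sigmoid: "1 / (1 - sigmoid t) = 1 + exp t"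
proof -
  have "1 + exp (- t) \<noteq> 0" using exp_gt_zero[of "- t"] by linarith
  then have "1 - sigmoid t = exp (- t) / (1 + exp (- t))"
    unfolding sigmoid_def by (simp add: field_simps)
  then have "1 / (1 - sigmoid t) = 1 / exp (- t) + 1" by (simp add: add_divide_distrib)
  then show ?thesis by (simp add: exp_minus inverse_eq_divide)
qed

definition sigmoid' :: "real \<Rightarrow> real" where
  "sigmoid' t = sigmoid t * (1 - sigmoid t)"

definition sigmoid'' :: "real \<Rightarrow> real" where
  "sigmoid'' t = sigmoid' t * (1 - 2 * sigmoid t)"

definition sigmoid''' :: "real \<Rightarrow> real" where
  "sigmoid''' t = sigmoid'' t * (1 - 2 * sigmoid t) - 2 * sigmoid' t * sigmoid' t"

lemma DERIV_sigmoid: "(sigmoid has_real_derivative sigmoid' t) (at t)"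
proof -
  have "1 + exp (- t) \<noteq> 0" using exp_gt_zero[of "- t"] by linarith
  then show ?thesis
    unfolding sigmoid_def[abs_def] sigmoid'_def
    by (auto intro!: derivative_eq_intros simp: sigmoid_def field_simps power2_eq_square)
qed

lemmas DERIV_sigmoid_chain [derivative_intros] = DERIV_chain2[OF DERIV_sigmoid]

lemma DERIV_sigmoid': "(sigmoid' has_real_derivative sigmoid'' t) (at t)"
proof -
  have "((\<lambda>t. sigmoid t * (1 - sigmoid t)) has_real_derivative
      sigmoid' t * (1 - sigmoid t) + sigmoid t * (- sigmoid' t)) (at t)"
    by (auto intro!: derivative_eq_intros)
  then show ?thesis unfolding sigmoid'_def[abs_def] sigmoid''_def by (simp add: algebra_simps)
qed

lemmas DERIV_sigmoid'_chain [derivative_intros] = DERIV_chain2[OF DERIV_sigmoid']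

lemma DERIV_sigmoid'': "(sigmoid'' has_real_derivative sigmoid''' t) (at t)"
proof -
  have "((\<lambda>t. sigmoid' t * (1 - 2 * sigmoid t)) has_real_derivative
      sigmoid'' t * (1 - 2 * sigmoid t) + sigmoid' t * (- (2 * sigmoid' t))) (at t)"
    by (auto intro!: derivative_eq_intros)
  then show ?thesis unfolding sigmoid''_def[abs_def] sigmoid'''_def by (simp add: algebra_simps)
qed

lemmas DERIV_sigmoid''_chain [derivative_intros] = DERIV_chain2[OF DERIV_sigmoid'']

lemma abs_one_minus_2_sigmoid_le: "\<bar>1 - 2 * sigmoid t\<bar> \<le> 1"
  using sigmoid_pos[of t] sigmoid_less_1[of t] by auto

lemma abs_sigmoid'_le: "\<bar>sigmoid' t\<bar> \<le> 1"
  using sigmoid_pos[of t] sigmoid_less_1[of t] unfolding sigmoid'_def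
  by (simp add: abs_mult mult_le_one)

lemma abs_sigmoid''_le: "\<bar>sigmoid'' t\<bar> \<le> 1"
  using abs_sigmoid'_le[of t] abs_one_minus_2_sigmoid_le[of t] unfolding sigmoid''_def
  by (simp add: abs_mult mult_le_one)

lemma abs_sigmoid'''_le: "\<bar>sigmoid''' t\<bar> \<le> 3"
proof -
  have "\<bar>sigmoid'' t * (1 - 2 * sigmoid t)\<bar> \<le> 1"
    using abs_sigmoid''_le[of t] abs_one_minus_2_sigmoid_le[of t] by (simp add: abs_mult mult_le_one)
  moreover have "\<bar>sigmoid' t\<bar> * \<bar>sigmoid' t\<bar> \<le> 1"
    using abs_sigmoid'_le[of t] by (intro mult_le_one) auto
  then have "\<bar>2 * sigmoid' t * sigmoid' t\<bar> \<le> 2" by (simp add: abs_mult)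
  ultimately show ?thesis unfolding sigmoid'''_def by linarith
qed

lemma sigmoid_lipschitz: "\<bar>sigmoid a - sigmoid b\<bar> \<le> \<bar>a - b\<bar>"
proof -
  have "\<bar>sigmoid (b + (a - b)) - sigmoid (b + 0)\<bar> \<le> 1 * \<bar>a - b\<bar>"
  proof (rule abs_diff_le_deriv_bound[where f'="\<lambda>s. sigmoid' (b + s)"])
    show "((\<lambda>s. sigmoid (b + s)) has_real_derivative sigmoid' (b + s)) (at s)" for s
      by (auto intro!: derivative_eq_intros)
  qed (rule abs_sigmoid'_le)
  then show ?thesis by simp
qed

lemma measurable_sigmoid [measurable]: "sigmoid \<in> borel_measurable borel"
  and measurable_sigmoid' [measurable]: "sigmoid' \<in> borel_measurable borel"
  and measurable_sigmoid'' [measurable]: "sigmoid'' \<in> borel_measurable borel"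
  unfolding sigmoid_def[abs_def] sigmoid'_def[abs_def] sigmoid''_def[abs_def]
  by measurable

definition xent :: "real \<Rightarrow> real \<Rightarrow> real" where
  "xent a h = - a * ln h - (1 - a) * ln (1 - h)"

definition xent' :: "real \<Rightarrow> real \<Rightarrow> real" where
  "xent' a h = - a / h + (1 - a) / (1 - h)"

definition xent'' :: "real \<Rightarrow> real \<Rightarrow> real" where
  "xent'' a h = a / h\<^sup>2 + (1 - a) / (1 - h)\<^sup>2"

definition xent''' :: "real \<Rightarrow> real \<Rightarrow> real" where
  "xent''' a h = - 2 * a / h ^ 3 + 2 * (1 - a) / (1 - h) ^ 3"

lemma xent_loss_mixture: "a * xent_loss h 1 + (1 - a) * xent_loss h 0 = xent a h"
  unfolding xent_loss_def xent_def by simp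

lemma DERIV_xent:
  assumes "0 < h" "h < 1"
  shows "(xent a has_real_derivative xent' a h) (at h)"
proof -
  have "((\<lambda>h. - a * ln h) has_real_derivative - a / h) (at h)"
    using assms by (auto intro!: derivative_eq_intros simp: field_simps)
  moreover have "((\<lambda>h. - (1 - a) * ln (1 - h)) has_real_derivative (1 - a) / (1 - h)) (at h)"
    using assms by (auto intro!: derivative_eq_intros simp: field_simps)
  ultimately have "((\<lambda>h. - a * ln h + - (1 - a) * ln (1 - h)) has_real_derivative - a / h + (1 - a) / (1 - h)) (at h)"
    by (rule DERIV_add)
  moreover have "xent a = (\<lambda>h. - a * ln h + - (1 - a) * ln (1 - h))"
    by (auto simp: xent_def fun_eq_iff algebra_simps)
  ultimately show ?thesis unfolding xent'_def by simp
qed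

lemma DERIV_xent':
  assumes "0 < h" "h < 1"
  shows "(xent' a has_real_derivative xent'' a h) (at h)"
proof -
  have "((\<lambda>h. - a / h) has_real_derivative a / h\<^sup>2) (at h)"
    using assms by (auto intro!: derivative_eq_intros simp: power2_eq_square)
  moreover have "((\<lambda>h. (1 - a) / (1 - h)) has_real_derivative (1 - a) / (1 - h)\<^sup>2) (at h)"
    using assms by (auto intro!: derivative_eq_intros simp: power2_eq_square)
  ultimately show ?thesis
    unfolding xent'_def[abs_def] xent''_def by (rule DERIV_add)
qed

lemma DERIV_xent'':
  assumes "0 < h" "h < 1"
  shows "(xent'' a has_real_derivative xent''' a h) (at h)"
proof -
  have inverse_square: "((\<lambda>u. c / u\<^sup>2) has_real_derivative - 2 * c / u ^ 3) (at u)"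
    if "u \<noteq> 0" for c u :: real
    using that by (auto intro!: derivative_eq_intros simp: power2_eq_square power3_eq_cube field_simps)
  have "((\<lambda>h. c / (1 - h)\<^sup>2) has_real_derivative - 2 * c / (1 - h) ^ 3 * (- 1)) (at h)" for c
    using assms by (intro DERIV_chain2[OF inverse_square]) (auto intro!: derivative_eq_intros)
  then have reflected: "((\<lambda>h. c / (1 - h)\<^sup>2) has_real_derivative 2 * c / (1 - h) ^ 3) (at h)" for c
    by simp
  have "h \<noteq> 0" using assms by simp
  from DERIV_add[OF inverse_square[where c=a, OF this] reflected[where c="1 - a"]]
  show ?thesis unfolding xent''_def[abs_def] xent'''_def .

qed

lemma measurable_xent [measurable]:
  assumes [measurable]: "f \<in> borel_measurable M" "g \<in> borel_measurable M"
  shows "(\<lambda>x. xent (f x) (g x)) \<in> borel_measurable M"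
  unfolding xent_def by measurable

lemma measurable_xent' [measurable]:
  assumes [measurable]: "f \<in> borel_measurable M" "g \<in> borel_measurable M"
  shows "(\<lambda>x. xent' (f x) (g x)) \<in> borel_measurable M"
  unfolding xent'_def by measurable

lemma measurable_xent'' [measurable]:
  assumes [measurable]: "f \<in> borel_measurable M" "g \<in> borel_measurable M"
  shows "(\<lambda>x. xent'' (f x) (g x)) \<in> borel_measurable M"
  unfolding xent''_def by measurable

definition barrier :: "real \<Rightarrow> real" where
  "barrier h = 1 / h + 1 / (1 - h)"

lemma barrier_pos: "0 < h \<Longrightarrow> h < 1 \<Longrightarrow> 0 < barrier h"
  unfolding barrier_def by (intro add_pos_pos divide_pos_pos) auto

context
  fixes a h :: real
  assumes a: "0 \<le> a" "a \<le> 1" and h: "0 < h" "h < 1"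
begin

lemma abs_xent_le: "\<bar>xent a h\<bar> \<le> barrier h"
proof -
  have l1: "0 \<le> - ln h" "- ln h \<le> 1 / h"
    using h ln_le_minus_one[of "1 / h"] by (auto simp: ln_div ln_ge_zero_iff)
  have l2: "0 \<le> - ln (1 - h)" "- ln (1 - h) \<le> 1 / (1 - h)"
    using h ln_le_minus_one[of "1 / (1 - h)"] by (auto simp: ln_div)
  have "a * (- ln h) \<le> - ln h" using l1 a by (intro mult_left_le_one_le) auto
  moreover have "0 \<le> a * (- ln h)" using l1 a by (intro mult_nonneg_nonneg) auto
  moreover have "(1 - a) * (- ln (1 - h)) \<le> - ln (1 - h)" using l2 a by (intro mult_left_le_one_le) auto
  moreover have "0 \<le> (1 - a) * (- ln (1 - h))" using l2 a by (intro mult_nonneg_nonneg) auto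
  moreover have "xent a h = a * (- ln h) + (1 - a) * (- ln (1 - h))" by (simp add: xent_def)
  ultimately show ?thesis unfolding barrier_def using l1 l2 by linarith
qed

lemma abs_xent'_le: "\<bar>xent' a h\<bar> \<le> barrier h"
proof -
  have "\<bar>a / h\<bar> \<le> 1 / h" "\<bar>(1 - a) / (1 - h)\<bar> \<le> 1 / (1 - h)"
    using a h by (simp_all add: divide_right_mono)
  then show ?thesis unfolding xent'_def barrier_def by linarith
qed

lemma xent'_eq: "xent' a h = (h - a) * barrier h"
  using h unfolding xent'_def barrier_def by (simp add: field_simps)

lemma abs_xent''_le: "\<bar>xent'' a h\<bar> \<le> (barrier h)\<^sup>2"
proof -
  have "0 \<le> a / h\<^sup>2" "a / h\<^sup>2 \<le> 1 / h\<^sup>2"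
    and "0 \<le> (1 - a) / (1 - h)\<^sup>2" "(1 - a) / (1 - h)\<^sup>2 \<le> 1 / (1 - h)\<^sup>2"
    using a h by (auto simp: divide_right_mono)
  moreover have "1 / h\<^sup>2 + 1 / (1 - h)\<^sup>2 \<le> (barrier h)\<^sup>2"
    unfolding barrier_def using h by (simp add: power2_sum power_divide)
  ultimately show ?thesis unfolding xent''_def by linarith
qed

lemma abs_xent'''_le: "\<bar>xent''' a h\<bar> \<le> 2 * (barrier h) ^ 3"
proof -
  have "0 \<le> 2 * a / h ^ 3" "2 * a / h ^ 3 \<le> 2 / h ^ 3"
    and "0 \<le> 2 * (1 - a) / (1 - h) ^ 3" "2 * (1 - a) / (1 - h) ^ 3 \<le> 2 / (1 - h) ^ 3"
    using a h by (auto simp: divide_right_mono)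
  moreover have "1 / h ^ 3 + 1 / (1 - h) ^ 3 \<le> (barrier h) ^ 3"
  proof -
    have cube: "(x + y) ^ 3 = x ^ 3 + y ^ 3 + 3 * x * y * (x + y)" for x y :: real
      by (simp add: power3_eq_cube algebra_simps)
    have "(1 / h + 1 / (1 - h)) ^ 3
        = (1 / h) ^ 3 + (1 / (1 - h)) ^ 3 + 3 * (1 / h) * (1 / (1 - h)) * (1 / h + 1 / (1 - h))"
      by (rule cube)
    moreover have "0 \<le> 3 * (1 / h) * (1 / (1 - h)) * (1 / h + 1 / (1 - h))" using h by simp
    ultimately show ?thesis unfolding barrier_def by (simp add: power_divide)
  qed
  ultimately show ?thesis unfolding xent'''_def by linarith
qed

end

section \<open>Averaged sigmoid networks\<close>

text \<open>Unit \<open>k\<close> has the weight vector \<open>\<Sum>p\<in>I. \<theta> p * M k p\<close>, linear in the parameter \<open>\<theta>\<close>; both the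
  fully connected and the convolutional network are of this form.\<close>

locale sigmoid_net =
  fixes d K :: nat and I :: "'p set" and M :: "nat \<Rightarrow> 'p \<Rightarrow> nat \<Rightarrow> real"
  assumes finite_I: "finite I" and K_pos: "0 < K"
begin

definition weights :: "nat \<Rightarrow> ('p \<Rightarrow> real) \<Rightarrow> nat \<Rightarrow> real" where
  "weights k \<theta> = (\<lambda>i. \<Sum>p\<in>I. \<theta> p * M k p i)"

definition pre :: "nat \<Rightarrow> ('p \<Rightarrow> real) \<Rightarrow> (nat \<Rightarrow> real) \<Rightarrow> real" where
  "pre k \<theta> x = dotp d (weights k \<theta>) x"

definition net :: "('p \<Rightarrow> real) \<Rightarrow> (nat \<Rightarrow> real) \<Rightarrow> real" where
  "net \<theta> x = (1 / real K) * (\<Sum>k<K. sigmoid (pre k \<theta> x))"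

definition net' :: "('p \<Rightarrow> real) \<Rightarrow> ('p \<Rightarrow> real) \<Rightarrow> (nat \<Rightarrow> real) \<Rightarrow> real" where
  "net' \<theta> z x = (1 / real K) * (\<Sum>k<K. sigmoid' (pre k \<theta> x) * pre k z x)"

definition net'' :: "('p \<Rightarrow> real) \<Rightarrow> ('p \<Rightarrow> real) \<Rightarrow> ('p \<Rightarrow> real) \<Rightarrow> (nat \<Rightarrow> real) \<Rightarrow> real" where
  "net'' \<theta> z v x = (1 / real K) * (\<Sum>k<K. sigmoid'' (pre k \<theta> x) * pre k z x * pre k v x)"

definition net''' ::
    "('p \<Rightarrow> real) \<Rightarrow> ('p \<Rightarrow> real) \<Rightarrow> ('p \<Rightarrow> real) \<Rightarrow> ('p \<Rightarrow> real) \<Rightarrow> (nat \<Rightarrow> real) \<Rightarrow> real" where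
  "net''' \<theta> z v w x = (1 / real K) * (\<Sum>k<K. sigmoid''' (pre k \<theta> x) * pre k z x * pre k v x * pre k w x)"

definition loss' :: "real \<Rightarrow> ('p \<Rightarrow> real) \<Rightarrow> ('p \<Rightarrow> real) \<Rightarrow> (nat \<Rightarrow> real) \<Rightarrow> real" where
  "loss' a \<theta> z x = xent' a (net \<theta> x) * net' \<theta> z x"

definition loss'' :: "real \<Rightarrow> ('p \<Rightarrow> real) \<Rightarrow> ('p \<Rightarrow> real) \<Rightarrow> ('p \<Rightarrow> real) \<Rightarrow> (nat \<Rightarrow> real) \<Rightarrow> real" where
  "loss'' a \<theta> z v x =
     xent'' a (net \<theta> x) * net' \<theta> z x * net' \<theta> v x + xent' a (net \<theta> x) * net'' \<theta> z v x"

definition loss''' ::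
    "real \<Rightarrow> ('p \<Rightarrow> real) \<Rightarrow> ('p \<Rightarrow> real) \<Rightarrow> ('p \<Rightarrow> real) \<Rightarrow> ('p \<Rightarrow> real) \<Rightarrow> (nat \<Rightarrow> real) \<Rightarrow> real" where
  "loss''' a \<theta> z v w x =
     xent''' a (net \<theta> x) * net' \<theta> z x * net' \<theta> v x * net' \<theta> w x
     + xent'' a (net \<theta> x) * (net'' \<theta> z w x * net' \<theta> v x + net' \<theta> z x * net'' \<theta> v w x + net' \<theta> w x * net'' \<theta> z v x)
     + xent' a (net \<theta> x) * net''' \<theta> z v w x"

lemma pre_add_scaled: "pre k (\<lambda>r. \<theta> r + t * e r) x = pre k \<theta> x + t * pre k e x"
proof -
  have "weights k (\<lambda>r. \<theta> r + t * e r) = (\<lambda>i. weights k \<theta> i + t * weights k e i)"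
    unfolding weights_def by (simp add: algebra_simps sum.distrib sum_distrib_left)
  then show ?thesis unfolding pre_def by (simp add: dotp_add_scaled)
qed

lemma measurable_pre [measurable]: "(\<lambda>x. pre k \<theta> x) \<in> borel_measurable (gauss d)"
  unfolding pre_def by simp

lemma measurable_net [measurable]: "(\<lambda>x. net \<theta> x) \<in> borel_measurable (gauss d)"
  unfolding net_def by measurable

lemma measurable_net' [measurable]: "(\<lambda>x. net' \<theta> z x) \<in> borel_measurable (gauss d)"
  unfolding net'_def by measurable

lemma measurable_net'' [measurable]: "(\<lambda>x. net'' \<theta> z v x) \<in> borel_measurable (gauss d)"
  unfolding net''_def by measurable

lemma net_pos: "0 < net \<theta> x"
proof -
  have "0 < (\<Sum>k<K. sigmoid (pre k \<theta> x))"
    using K_pos by (intro sum_pos) (auto simp: sigmoid_pos)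
  then show ?thesis unfolding net_def using K_pos by simp
qed

lemma net_less_1: "net \<theta> x < 1"
proof -
  have "(\<Sum>k<K. sigmoid (pre k \<theta> x)) < (\<Sum>k<K. 1)"
    using K_pos by (intro sum_strict_mono) (auto simp: sigmoid_less_1)
  then show ?thesis unfolding net_def using K_pos by (simp add: divide_less_eq)
qed

lemma net_between_0_1: "0 \<le> net \<theta> x" "net \<theta> x \<le> 1"
  using net_pos[of \<theta> x] net_less_1[of \<theta> x] by auto

lemma net_lipschitz: "\<bar>net \<theta> x - net \<theta>' x\<bar> \<le> (1 / real K) * (\<Sum>k<K. \<bar>pre k \<theta> x - pre k \<theta>' x\<bar>)"
proof -
  have "\<bar>(\<Sum>k<K. sigmoid (pre k \<theta> x)) - (\<Sum>k<K. sigmoid (pre k \<theta>' x))\<bar>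
      \<le> (\<Sum>k<K. \<bar>sigmoid (pre k \<theta> x) - sigmoid (pre k \<theta>' x)\<bar>)"
    unfolding sum_subtractf[symmetric] by (rule sum_abs)
  also have "\<dots> \<le> (\<Sum>k<K. \<bar>pre k \<theta> x - pre k \<theta>' x\<bar>)" by (intro sum_mono sigmoid_lipschitz)
  finally show ?thesis unfolding net_def using K_pos
    by (simp add: abs_divide divide_right_mono diff_divide_distrib[symmetric])
qed

context
  fixes \<theta> e :: "'p \<Rightarrow> real" and x :: "nat \<Rightarrow> real"
begin

lemma DERIV_net:
  "((\<lambda>t. net (\<lambda>r. \<theta> r + t * e r) x) has_real_derivative net' (\<lambda>r. \<theta> r + t * e r) e x) (at t)"
  unfolding net_def net'_def pre_add_scaled using K_pos by (auto intro!: derivative_eq_intros)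

lemma DERIV_net':
  "((\<lambda>t. net' (\<lambda>r. \<theta> r + t * e r) z x) has_real_derivative net'' (\<lambda>r. \<theta> r + t * e r) z e x) (at t)"
  unfolding net'_def net''_def pre_add_scaled using K_pos by (auto intro!: derivative_eq_intros sum.cong)

lemma DERIV_net'':
  "((\<lambda>t. net'' (\<lambda>r. \<theta> r + t * e r) z v x) has_real_derivative net''' (\<lambda>r. \<theta> r + t * e r) z v e x) (at t)"
  unfolding net''_def net'''_def pre_add_scaled using K_pos by (auto intro!: derivative_eq_intros sum.cong)

lemma DERIV_loss:
  "((\<lambda>t. xent a (net (\<lambda>r. \<theta> r + t * e r) x)) has_real_derivative loss' a (\<lambda>r. \<theta> r + t * e r) e x) (at t)"
  unfolding loss'_def by (rule DERIV_chain2[OF DERIV_xent DERIV_net]) (rule net_pos net_less_1)+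

lemma DERIV_loss':
  "((\<lambda>t. loss' a (\<lambda>r. \<theta> r + t * e r) z x) has_real_derivative loss'' a (\<lambda>r. \<theta> r + t * e r) z e x) (at t)"
proof -
  have "((\<lambda>t. xent' a (net (\<lambda>r. \<theta> r + t * e r) x)) has_real_derivative
      xent'' a (net (\<lambda>r. \<theta> r + t * e r) x) * net' (\<lambda>r. \<theta> r + t * e r) e x) (at t)"
    by (rule DERIV_chain2[OF DERIV_xent' DERIV_net]) (rule net_pos net_less_1)+
  from DERIV_mult[OF this DERIV_net'] show ?thesis
    unfolding loss'_def loss''_def by (rule DERIV_cong) (simp add: algebra_simps)
qed

lemma DERIV_loss'':
  "((\<lambda>t. loss'' a (\<lambda>r. \<theta> r + t * e r) z v x) has_real_derivative loss''' a (\<lambda>r. \<theta> r + t * e r) z v e x) (at t)"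
proof -
  have xent': "((\<lambda>t. xent' a (net (\<lambda>r. \<theta> r + t * e r) x)) has_real_derivative
      xent'' a (net (\<lambda>r. \<theta> r + t * e r) x) * net' (\<lambda>r. \<theta> r + t * e r) e x) (at t)"
    by (rule DERIV_chain2[OF DERIV_xent' DERIV_net]) (rule net_pos net_less_1)+
  have xent'': "((\<lambda>t. xent'' a (net (\<lambda>r. \<theta> r + t * e r) x)) has_real_derivative
      xent''' a (net (\<lambda>r. \<theta> r + t * e r) x) * net' (\<lambda>r. \<theta> r + t * e r) e x) (at t)"
    by (rule DERIV_chain2[OF DERIV_xent'' DERIV_net]) (rule net_pos net_less_1)+
  from DERIV_add[OF DERIV_mult[OF DERIV_mult[OF xent'' DERIV_net'] DERIV_net']
      DERIV_mult[OF xent' DERIV_net'']]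
  show ?thesis unfolding loss''_def loss'''_def by (rule DERIV_cong) (simp add: algebra_simps)
qed

end

definition barrier_env :: "nat \<Rightarrow> ('p \<Rightarrow> real) \<Rightarrow> ('p \<Rightarrow> real) \<Rightarrow> (nat \<Rightarrow> real) \<Rightarrow> real" where
  "barrier_env m \<theta> e x = (1 / real K) * (\<Sum>j<K. 4 ^ m * (exp (real m * \<bar>pre j \<theta> x\<bar>) * exp (real m * \<bar>pre j e x\<bar>)))"

definition mean_abs_pre :: "('p \<Rightarrow> real) list \<Rightarrow> (nat \<Rightarrow> real) \<Rightarrow> real" where
  "mean_abs_pre ws x = (1 / real K) * (\<Sum>k<K. \<Prod>w\<leftarrow>ws. \<bar>pre k w x\<bar>)"

lemma barrier_env_nonneg: "0 \<le> barrier_env m \<theta> e x"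
  unfolding barrier_env_def by (intro mult_nonneg_nonneg sum_nonneg) auto

lemma mean_abs_pre_nonneg: "0 \<le> mean_abs_pre ws x"
  unfolding mean_abs_pre_def by (intro mult_nonneg_nonneg sum_nonneg prod_list_nonneg) auto

text \<open>The barrier \<open>1/h + 1/(1-h)\<close> of the network output is controlled by those of the individual
  units, by convexity of \<open>1/h\<close>; each of those is at most \<open>4 exp |pre-activation|\<close>.\<close>

lemma barrier_net_le: "barrier (net \<theta> x) \<le> (1 / real K) * (\<Sum>j<K. 4 * exp \<bar>pre j \<theta> x\<bar>)"
proof -
  have "1 / net \<theta> x \<le> (1 / real K) * (\<Sum>j<K. 1 / sigmoid (pre j \<theta> x))"
    unfolding net_def by (rule inverse_mean_le_mean_inverse[OF K_pos]) (simp add: sigmoid_pos)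
  moreover have "1 - net \<theta> x = (1 / real K) * (\<Sum>j<K. 1 - sigmoid (pre j \<theta> x))"
    unfolding net_def using K_pos by (simp add: sum_subtractf field_simps)
  then have "1 / (1 - net \<theta> x) \<le> (1 / real K) * (\<Sum>j<K. 1 / (1 - sigmoid (pre j \<theta> x)))"
    by (simp only:) (rule inverse_mean_le_mean_inverse[OF K_pos], simp add: sigmoid_less_1)
  ultimately have "barrier (net \<theta> x)
      \<le> (1 / real K) * (\<Sum>j<K. 1 / sigmoid (pre j \<theta> x) + 1 / (1 - sigmoid (pre j \<theta> x)))"
    unfolding barrier_def by (simp add: sum.distrib distrib_left)
  also have "\<dots> \<le> (1 / real K) * (\<Sum>j<K. 4 * exp \<bar>pre j \<theta> x\<bar>)"
    unfolding inverse_sigmoid inverse_one_minus_sigmoid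
  proof (intro mult_left_mono sum_mono)
    fix j
    have "exp (pre j \<theta> x) \<le> exp \<bar>pre j \<theta> x\<bar>" "exp (- pre j \<theta> x) \<le> exp \<bar>pre j \<theta> x\<bar>"
      "1 \<le> exp \<bar>pre j \<theta> x\<bar>" by auto
    then show "1 + exp (- pre j \<theta> x) + (1 + exp (pre j \<theta> x)) \<le> 4 * exp \<bar>pre j \<theta> x\<bar>" by linarith
  qed simp
  finally show ?thesis .
qed

lemma barrier_net_shift_power_le:
  assumes "\<bar>t\<bar> \<le> 1"
  shows "(barrier (net (\<lambda>r. \<theta> r + t * e r) x)) ^ m \<le> barrier_env m \<theta> e x"
proof -
  let ?\<theta>t = "\<lambda>r. \<theta> r + t * e r"
  have "(barrier (net ?\<theta>t x)) ^ m \<le> ((1 / real K) * (\<Sum>j<K. 4 * exp \<bar>pre j ?\<theta>t x\<bar>)) ^ m"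
    using less_imp_le[OF barrier_pos[OF net_pos net_less_1]] by (intro power_mono barrier_net_le)
  also have "\<dots> \<le> (1 / real K) * (\<Sum>j<K. (4 * exp \<bar>pre j ?\<theta>t x\<bar>) ^ m)"
    by (rule power_mean_le_mean_power[OF K_pos]) simp
  also have "\<dots> \<le> barrier_env m \<theta> e x"
    unfolding barrier_env_def
  proof (intro mult_left_mono sum_mono)
    fix j
    have "\<bar>t * pre j e x\<bar> \<le> \<bar>pre j e x\<bar>"
      using assms by (simp add: abs_mult mult_left_le_one_le)
    then have triangle: "\<bar>pre j ?\<theta>t x\<bar> \<le> \<bar>pre j \<theta> x\<bar> + \<bar>pre j e x\<bar>"
      unfolding pre_add_scaled using abs_triangle_ineq[of "pre j \<theta> x" "t * pre j e x"] by linarith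
    have "real m * \<bar>pre j ?\<theta>t x\<bar> \<le> real m * \<bar>pre j \<theta> x\<bar> + real m * \<bar>pre j e x\<bar>"
      using mult_left_mono[OF triangle, of "real m"] by (simp add: distrib_left)
    then have exp_le: "exp (real m * \<bar>pre j ?\<theta>t x\<bar>) \<le> exp (real m * \<bar>pre j \<theta> x\<bar>) * exp (real m * \<bar>pre j e x\<bar>)"
      by (simp add: exp_add[symmetric])
    have "(4 * exp \<bar>pre j ?\<theta>t x\<bar>) ^ m = 4 ^ m * exp (real m * \<bar>pre j ?\<theta>t x\<bar>)"
      by (simp add: power_mult_distrib exp_of_nat_mult)
    also have "\<dots> \<le> 4 ^ m * (exp (real m * \<bar>pre j \<theta> x\<bar>) * exp (real m * \<bar>pre j e x\<bar>))"
      using exp_le by (rule mult_left_mono) simp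
    finally show "(4 * exp \<bar>pre j ?\<theta>t x\<bar>) ^ m
        \<le> 4 ^ m * (exp (real m * \<bar>pre j \<theta> x\<bar>) * exp (real m * \<bar>pre j e x\<bar>))" .
  qed simp
  finally show ?thesis .
qed

lemma abs_net'_le: "\<bar>net' \<theta> z x\<bar> \<le> mean_abs_pre [z] x"
proof -
  have "\<bar>\<Sum>k<K. sigmoid' (pre k \<theta> x) * pre k z x\<bar> \<le> (\<Sum>k<K. \<bar>pre k z x\<bar>)"
    using abs_sigmoid'_le
    by (intro order_trans[OF sum_abs] sum_mono) (auto simp: abs_mult intro: mult_left_le_one_le)
  then show ?thesis unfolding net'_def mean_abs_pre_def using K_pos by (simp add: abs_mult divide_right_mono)
qed

lemma abs_net''_le: "\<bar>net'' \<theta> z v x\<bar> \<le> mean_abs_pre [z, v] x"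
proof -
  have "\<bar>\<Sum>k<K. sigmoid'' (pre k \<theta> x) * pre k z x * pre k v x\<bar> \<le> (\<Sum>k<K. \<bar>pre k z x\<bar> * \<bar>pre k v x\<bar>)"
    using abs_sigmoid''_le
    by (intro order_trans[OF sum_abs] sum_mono) (auto simp: abs_mult mult.assoc intro: mult_left_le_one_le)
  then show ?thesis unfolding net''_def mean_abs_pre_def using K_pos by (simp add: abs_mult divide_right_mono)
qed

lemma abs_net'''_le: "\<bar>net''' \<theta> z v w x\<bar> \<le> 3 * mean_abs_pre [z, v, w] x"
proof -
  have "\<bar>\<Sum>k<K. sigmoid''' (pre k \<theta> x) * pre k z x * pre k v x * pre k w x\<bar>
      \<le> (\<Sum>k<K. 3 * (\<bar>pre k z x\<bar> * \<bar>pre k v x\<bar> * \<bar>pre k w x\<bar>))"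
  proof (intro order_trans[OF sum_abs] sum_mono)
    fix k
    have "\<bar>sigmoid''' (pre k \<theta> x)\<bar> * (\<bar>pre k z x\<bar> * \<bar>pre k v x\<bar> * \<bar>pre k w x\<bar>)
        \<le> 3 * (\<bar>pre k z x\<bar> * \<bar>pre k v x\<bar> * \<bar>pre k w x\<bar>)"
      using abs_sigmoid'''_le by (intro mult_right_mono) auto
    then show "\<bar>sigmoid''' (pre k \<theta> x) * pre k z x * pre k v x * pre k w x\<bar>
        \<le> 3 * (\<bar>pre k z x\<bar> * \<bar>pre k v x\<bar> * \<bar>pre k w x\<bar>)"
      by (simp add: abs_mult mult_ac)
  qed
  then show ?thesis unfolding net'''_def mean_abs_pre_def using K_pos
    by (simp add: abs_mult divide_right_mono sum_distrib_left[symmetric] mult_ac)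
qed

context
  fixes a t :: real and \<theta> e :: "'p \<Rightarrow> real" and x :: "nat \<Rightarrow> real"
  assumes a: "0 \<le> a" "a \<le> 1" and t: "\<bar>t\<bar> \<le> 1"
begin

lemma barrier_net_shift_le: "barrier (net (\<lambda>r. \<theta> r + t * e r) x) \<le> barrier_env 1 \<theta> e x"
  using barrier_net_shift_power_le[OF t, of \<theta> e x 1] by (simp only: power_one_right)

lemma abs_xent_net_le: "\<bar>xent a (net (\<lambda>r. \<theta> r + t * e r) x)\<bar> \<le> barrier_env 1 \<theta> e x"
  by (rule order_trans[OF abs_xent_le[OF a net_pos net_less_1] barrier_net_shift_le])

lemma abs_xent'_net_le: "\<bar>xent' a (net (\<lambda>r. \<theta> r + t * e r) x)\<bar> \<le> barrier_env 1 \<theta> e x"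
  by (rule order_trans[OF abs_xent'_le[OF a net_pos net_less_1] barrier_net_shift_le])

lemma abs_xent''_net_le: "\<bar>xent'' a (net (\<lambda>r. \<theta> r + t * e r) x)\<bar> \<le> barrier_env 2 \<theta> e x"
  by (rule order_trans[OF abs_xent''_le[OF a net_pos net_less_1] barrier_net_shift_power_le[OF t]])

lemma abs_loss'_le: "\<bar>loss' a (\<lambda>r. \<theta> r + t * e r) z x\<bar> \<le> barrier_env 1 \<theta> e x * mean_abs_pre [z] x"
  unfolding loss'_def abs_mult
  by (intro mult_mono abs_xent'_net_le abs_net'_le barrier_env_nonneg) simp

lemma abs_loss''_le:
  "\<bar>loss'' a (\<lambda>r. \<theta> r + t * e r) z v x\<bar>
    \<le> barrier_env 2 \<theta> e x * mean_abs_pre [z] x * mean_abs_pre [v] x + barrier_env 1 \<theta> e x * mean_abs_pre [z, v] x"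
proof -
  let ?\<theta>t = "\<lambda>r. \<theta> r + t * e r"
  have "\<bar>xent'' a (net ?\<theta>t x) * net' ?\<theta>t z x * net' ?\<theta>t v x\<bar> \<le> barrier_env 2 \<theta> e x * mean_abs_pre [z] x * mean_abs_pre [v] x"
    unfolding abs_mult
    by (intro mult_mono abs_xent''_net_le abs_net'_le barrier_env_nonneg mean_abs_pre_nonneg mult_nonneg_nonneg) simp_all
  moreover have "\<bar>xent' a (net ?\<theta>t x) * net'' ?\<theta>t z v x\<bar> \<le> barrier_env 1 \<theta> e x * mean_abs_pre [z, v] x"
    unfolding abs_mult by (intro mult_mono abs_xent'_net_le abs_net''_le barrier_env_nonneg) simp
  ultimately show ?thesis unfolding loss''_def by (rule order_trans[OF abs_triangle_ineq add_mono])
qed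

end

text \<open>Since \<open>xent' a\<close> vanishes at \<open>h = a\<close>, it is proportional to \<open>|h - a|\<close>, which the Lipschitz
  bound of the network controls.\<close>


lemma abs_xent'_net_shift_le:
  assumes t: "\<bar>t\<bar> \<le> 1"
  shows "\<bar>xent' (net \<theta> x) (net (\<lambda>r. \<theta> r + t * e r) x)\<bar> \<le> barrier_env 1 \<theta> e x * mean_abs_pre [e] x"
proof -
  let ?\<theta>t = "\<lambda>r. \<theta> r + t * e r"
  let ?h = "net ?\<theta>t x" and ?a = "net \<theta> x"
  have "\<bar>?h - ?a\<bar> \<le> (1 / real K) * (\<Sum>k<K. \<bar>pre k ?\<theta>t x - pre k \<theta> x\<bar>)" by (rule net_lipschitz)
  also have "\<dots> \<le> mean_abs_pre [e] x" unfolding mean_abs_pre_def pre_add_scaled using t K_pos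
    by (intro mult_left_mono sum_mono) (auto simp: abs_mult mult_left_le_one_le)
  finally have "\<bar>?h - ?a\<bar> \<le> mean_abs_pre [e] x" .
  moreover have "barrier ?h \<le> barrier_env 1 \<theta> e x"
    using barrier_net_shift_power_le[OF t, of \<theta> e x 1] by (simp only: power_one_right)
  moreover have "0 < barrier ?h" by (rule barrier_pos[OF net_pos net_less_1])
  ultimately have "barrier ?h * \<bar>?h - ?a\<bar> \<le> barrier_env 1 \<theta> e x * mean_abs_pre [e] x"
    using barrier_env_nonneg[of 1 \<theta> e x] by (intro mult_mono) simp_all
  moreover have a: "0 \<le> ?a" "?a \<le> 1" by (rule net_between_0_1)+
  ultimately show ?thesis
    unfolding xent'_eq[OF a net_pos net_less_1] abs_mult using \<open>0 < barrier ?h\<close>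
    by (simp add: mult.commute)
qed

lemma abs_loss'''_le:
  assumes t: "\<bar>t\<bar> \<le> 1"
  shows "\<bar>loss''' (net \<theta> x) (\<lambda>r. \<theta> r + t * e r) z v e x\<bar> \<le>
     2 * barrier_env 3 \<theta> e x * mean_abs_pre [z] x * mean_abs_pre [v] x * mean_abs_pre [e] x
     + barrier_env 2 \<theta> e x * (mean_abs_pre [z, e] x * mean_abs_pre [v] x + mean_abs_pre [z] x * mean_abs_pre [v, e] x
                       + mean_abs_pre [e] x * mean_abs_pre [z, v] x)
     + barrier_env 1 \<theta> e x * mean_abs_pre [e] x * (3 * mean_abs_pre [z, v, e] x)"
proof -
  let ?\<theta>t = "\<lambda>r. \<theta> r + t * e r"
  let ?h = "net ?\<theta>t x" and ?a = "net \<theta> x"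
  have a: "0 \<le> ?a" "?a \<le> 1" by (rule net_between_0_1)+
  note nonneg = barrier_env_nonneg mean_abs_pre_nonneg
  have xent''': "\<bar>xent''' ?a ?h\<bar> \<le> 2 * barrier_env 3 \<theta> e x"
    using abs_xent'''_le[OF a net_pos net_less_1, of ?\<theta>t x]
      barrier_net_shift_power_le[OF t, of \<theta> e x 3]
    by simp
  have T1: "\<bar>xent''' ?a ?h * net' ?\<theta>t z x * net' ?\<theta>t v x * net' ?\<theta>t e x\<bar>
      \<le> 2 * barrier_env 3 \<theta> e x * mean_abs_pre [z] x * mean_abs_pre [v] x * mean_abs_pre [e] x"
    unfolding abs_mult
    by (intro mult_mono xent''' abs_net'_le mult_nonneg_nonneg nonneg; simp)
  have T2: "\<bar>xent'' ?a ?h * (net'' ?\<theta>t z e x * net' ?\<theta>t v x + net' ?\<theta>t z x * net'' ?\<theta>t v e x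
        + net' ?\<theta>t e x * net'' ?\<theta>t z v x)\<bar>
      \<le> barrier_env 2 \<theta> e x * (mean_abs_pre [z, e] x * mean_abs_pre [v] x + mean_abs_pre [z] x * mean_abs_pre [v, e] x
                       + mean_abs_pre [e] x * mean_abs_pre [z, v] x)"
    unfolding abs_mult[of "xent'' _ _"]
  proof (intro mult_mono abs_xent''_net_le[OF net_between_0_1 t] order_trans[OF abs_triangle_ineq]
      add_mono order_trans[OF abs_triangle_ineq])
    show "\<bar>net'' ?\<theta>t z e x * net' ?\<theta>t v x\<bar> \<le> mean_abs_pre [z, e] x * mean_abs_pre [v] x"
      "\<bar>net' ?\<theta>t z x * net'' ?\<theta>t v e x\<bar> \<le> mean_abs_pre [z] x * mean_abs_pre [v, e] x"
      "\<bar>net' ?\<theta>t e x * net'' ?\<theta>t z v x\<bar> \<le> mean_abs_pre [e] x * mean_abs_pre [z, v] x"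
      unfolding abs_mult by (intro mult_mono abs_net'_le abs_net''_le nonneg; simp)+
  qed (simp_all add: nonneg add_nonneg_nonneg mult_nonneg_nonneg)
  have T3: "\<bar>xent' ?a ?h * net''' ?\<theta>t z v e x\<bar> \<le> barrier_env 1 \<theta> e x * mean_abs_pre [e] x * (3 * mean_abs_pre [z, v, e] x)"
    unfolding abs_mult by (intro mult_mono abs_xent'_net_shift_le[OF t] abs_net'''_le; simp add: nonneg)
  show ?thesis unfolding loss'''_def
    using T1 T2 T3 abs_triangle_ineq order_trans add_mono by (smt (verit))
qed

end

section \<open>The Hessian of the population risk\<close>

context sigmoid_net
begin

definition wnorm :: "nat \<Rightarrow> ('p \<Rightarrow> real) \<Rightarrow> real" where
  "wnorm k w = sqrt (sq_norm d (weights k w))"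

definition mean_wnorm :: "('p \<Rightarrow> real) list \<Rightarrow> real" where
  "mean_wnorm ws = (1 / real K) * (\<Sum>k<K. \<Prod>w\<leftarrow>ws. wnorm k w)"

lemma wnorm_nonneg: "0 \<le> wnorm k w"
  unfolding wnorm_def by simp

lemma mean_wnorm_nonneg: "0 \<le> mean_wnorm ws"
  unfolding mean_wnorm_def by (intro mult_nonneg_nonneg sum_nonneg prod_list_nonneg) (auto simp: wnorm_nonneg)

lemma integrable_le_exp_mean_abs_pre:
  assumes "0 \<le> \<beta>" "sq_norm d u \<le> R" "sq_norm d u' \<le> R"
  shows "integrable_le (gauss d)
      (\<lambda>x. exp (\<beta> * \<bar>dotp d u x\<bar>) * exp (\<beta> * \<bar>dotp d u' x\<bar>) * (\<Prod>a\<leftarrow>as. \<bar>dotp d a x\<bar>)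
        * (\<Prod>ws\<leftarrow>wss. mean_abs_pre ws x))
      (moment_const \<beta> R 2 (length as + sum_list (map length wss)) * (\<Prod>a\<leftarrow>as. sqrt (sq_norm d a))
        * (\<Prod>ws\<leftarrow>wss. mean_wnorm ws))"
proof (induction wss arbitrary: as)
  case Nil
  have "integrable_le (gauss d) (\<lambda>x. (\<Prod>w\<leftarrow>[u, u']. exp (\<beta> * \<bar>dotp d w x\<bar>)) * (\<Prod>a\<leftarrow>as. \<bar>dotp d a x\<bar>))
      (moment_const \<beta> R (length [u, u']) (length as) * (\<Prod>a\<leftarrow>as. sqrt (sq_norm d a)))"
    using assms by (intro gauss_moment_bound) auto
  then show ?case by (simp add: numeral_2_eq_2)
next
  case (Cons ws wss)
  let ?E = "\<lambda>x. exp (\<beta> * \<bar>dotp d u x\<bar>) * exp (\<beta> * \<bar>dotp d u' x\<bar>) * (\<Prod>a\<leftarrow>as. \<bar>dotp d a x\<bar>)"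
  let ?R = "\<lambda>x. \<Prod>vs\<leftarrow>wss. mean_abs_pre vs x"
  let ?C = "moment_const \<beta> R 2 (length as + (length ws + sum_list (map length wss)))
      * (\<Prod>a\<leftarrow>as. sqrt (sq_norm d a))"
  let ?Rb = "\<Prod>vs\<leftarrow>wss. mean_wnorm vs"
  \<comment> \<open>Expanding the mean over units turns the product into one Gaussian moment per unit.\<close>
  have unit: "integrable_le (gauss d) (\<lambda>x. ?E x * (\<Prod>w\<leftarrow>ws. \<bar>pre k w x\<bar>) * ?R x)
      (?C * (\<Prod>w\<leftarrow>ws. wnorm k w) * ?Rb)" for k
    using Cons.IH[of "as @ map (weights k) ws"]
    by (simp add: pre_def wnorm_def o_def mult.assoc add.assoc)
  have "integrable_le (gauss d) (\<lambda>x. (1 / real K) * (\<Sum>k<K. ?E x * (\<Prod>w\<leftarrow>ws. \<bar>pre k w x\<bar>) * ?R x))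
      ((1 / real K) * (\<Sum>k<K. ?C * (\<Prod>w\<leftarrow>ws. wnorm k w) * ?Rb))"
    by (intro integrable_le_cmult integrable_le_sum unit) auto
  moreover have "(1 / real K) * (\<Sum>k<K. ?E x * (\<Prod>w\<leftarrow>ws. \<bar>pre k w x\<bar>) * ?R x)
      = ?E x * (mean_abs_pre ws x * ?R x)" for x
    unfolding mean_abs_pre_def by (simp add: sum_distrib_left sum_distrib_right mult_ac)
  moreover have "(1 / real K) * (\<Sum>k<K. ?C * (\<Prod>w\<leftarrow>ws. wnorm k w) * ?Rb) = ?C * (mean_wnorm ws * ?Rb)"
    unfolding mean_wnorm_def by (simp add: sum_distrib_left sum_distrib_right mult_ac)
  ultimately show ?case by simp
qed

lemma integrable_le_barrier_env_mean_abs_pre: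
  assumes "\<And>j. j < K \<Longrightarrow> sq_norm d (weights j \<theta>) \<le> R \<and> sq_norm d (weights j e) \<le> R"
  shows "integrable_le (gauss d) (\<lambda>x. barrier_env m \<theta> e x * (\<Prod>ws\<leftarrow>wss. mean_abs_pre ws x))
      (4 ^ m * moment_const (real m) R 2 (sum_list (map length wss)) * (\<Prod>ws\<leftarrow>wss. mean_wnorm ws))"
proof -
  let ?C = "moment_const (real m) R 2 (sum_list (map length wss)) * (\<Prod>ws\<leftarrow>wss. mean_wnorm ws)"
  let ?F = "\<lambda>j x. 4 ^ m * (exp (real m * \<bar>pre j \<theta> x\<bar>) * exp (real m * \<bar>pre j e x\<bar>)
      * (\<Prod>ws\<leftarrow>wss. mean_abs_pre ws x))"
  have "integrable_le (gauss d) (?F j) (4 ^ m * ?C)" if "j < K" for j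
    using integrable_le_exp_mean_abs_pre[where \<beta>="real m" and u="weights j \<theta>" and u'="weights j e"
        and R=R and as="[]" and wss=wss] assms[OF that]
    by (intro integrable_le_cmult) (simp_all add: pre_def)
  then have "integrable_le (gauss d) (\<lambda>x. (1 / real K) * (\<Sum>j<K. ?F j x)) ((1 / real K) * (\<Sum>j<K. 4 ^ m * ?C))"
    by (intro integrable_le_cmult[where c="1 / real K"] integrable_le_sum) auto
  moreover have "(1 / real K) * (\<Sum>j<K. ?F j x) = barrier_env m \<theta> e x * (\<Prod>ws\<leftarrow>wss. mean_abs_pre ws x)" for x
    unfolding barrier_env_def by (simp add: sum_distrib_right mult.assoc)
  moreover have "(1 / real K) * (\<Sum>j<K. 4 ^ m * ?C) = 4 ^ m * ?C" using K_pos by simp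
  ultimately show ?thesis by (simp add: mult.assoc)
qed

lemma weights_sq_norm_bounded: "\<exists>R. \<forall>j<K. sq_norm d (weights j \<theta>) \<le> R \<and> sq_norm d (weights j e) \<le> R"
proof (intro exI allI impI)
  fix j assume "j < K"
  then have "sq_norm d (weights j \<theta>) + sq_norm d (weights j e)
      \<le> (\<Sum>i<K. sq_norm d (weights i \<theta>) + sq_norm d (weights i e))"
    by (intro member_le_sum) (auto intro: add_nonneg_nonneg)
  then show "sq_norm d (weights j \<theta>) \<le> (\<Sum>i<K. sq_norm d (weights i \<theta>) + sq_norm d (weights i e))
      \<and> sq_norm d (weights j e) \<le> (\<Sum>i<K. sq_norm d (weights i \<theta>) + sq_norm d (weights i e))"
    using sq_norm_nonneg[of d "weights j \<theta>"] sq_norm_nonneg[of d "weights j e"] by linarith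
qed

lemma measurable_loss' [measurable]: "(\<lambda>x. loss' (net \<theta>s x) \<theta> z x) \<in> borel_measurable (gauss d)"
  unfolding loss'_def by measurable

lemma measurable_loss'' [measurable]: "(\<lambda>x. loss'' (net \<theta>s x) \<theta> z v x) \<in> borel_measurable (gauss d)"
  unfolding loss''_def by measurable

lemma DERIV_risk:
  "((\<lambda>t. \<integral>x. xent (net \<theta>s x) (net (\<lambda>r. \<theta> r + t * e r) x) \<partial>gauss d) has_real_derivative
     (\<integral>x. loss' (net \<theta>s x) \<theta> e x \<partial>gauss d)) (at 0)"
proof -
  obtain R where R: "\<And>j. j < K \<Longrightarrow> sq_norm d (weights j \<theta>) \<le> R \<and> sq_norm d (weights j e) \<le> R"
    using weights_sq_norm_bounded by blast
  have "((\<lambda>t. \<integral>x. xent (net \<theta>s x) (net (\<lambda>r. \<theta> r + t * e r) x) \<partial>gauss d) has_real_derivative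
     (\<integral>x. loss' (net \<theta>s x) (\<lambda>r. \<theta> r + 0 * e r) e x \<partial>gauss d)) (at 0)"
  proof (rule has_real_derivative_integral[where G="\<lambda>x. barrier_env 1 \<theta> e x * mean_abs_pre [e] x"])
    show "integrable (gauss d) (\<lambda>x. xent (net \<theta>s x) (net (\<lambda>r. \<theta> r + t * e r) x))" if "\<bar>t\<bar> < 1" for t
    proof (rule Bochner_Integration.integrable_bound)
      show "integrable (gauss d) (\<lambda>x. barrier_env 1 \<theta> e x)"
        using integrable_le_barrier_env_mean_abs_pre[OF R, where m=1 and wss="[]"] by (simp add: integrable_le_def)
      show "AE x in gauss d. norm (xent (net \<theta>s x) (net (\<lambda>r. \<theta> r + t * e r) x)) \<le> norm (barrier_env 1 \<theta> e x)"
        using abs_xent_net_le[OF net_between_0_1] that barrier_env_nonneg by (auto intro!: AE_I2)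
    qed measurable
    show "integrable (gauss d) (\<lambda>x. barrier_env 1 \<theta> e x * mean_abs_pre [e] x)"
      using integrable_le_barrier_env_mean_abs_pre[OF R, where m=1 and wss="[[e]]"] by (simp add: integrable_le_def)
    show "\<bar>loss' (net \<theta>s x) (\<lambda>r. \<theta> r + t * e r) e x\<bar> \<le> barrier_env 1 \<theta> e x * mean_abs_pre [e] x"
      if "\<bar>t\<bar> < 1" for t x
      using abs_loss'_le[OF net_between_0_1] that by simp
  qed (auto intro: DERIV_loss)
  then show ?thesis by simp
qed

lemma DERIV_risk':
  "((\<lambda>s. \<integral>x. loss' (net \<theta>s x) (\<lambda>r. \<theta> r + s * e' r) e x \<partial>gauss d) has_real_derivative
     (\<integral>x. loss'' (net \<theta>s x) \<theta> e e' x \<partial>gauss d)) (at 0)"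
proof -
  obtain R where R: "\<And>j. j < K \<Longrightarrow> sq_norm d (weights j \<theta>) \<le> R \<and> sq_norm d (weights j e') \<le> R"
    using weights_sq_norm_bounded by blast
  have "((\<lambda>s. \<integral>x. loss' (net \<theta>s x) (\<lambda>r. \<theta> r + s * e' r) e x \<partial>gauss d) has_real_derivative
     (\<integral>x. loss'' (net \<theta>s x) (\<lambda>r. \<theta> r + 0 * e' r) e e' x \<partial>gauss d)) (at 0)"
  proof (rule has_real_derivative_integral
      [where G="\<lambda>x. barrier_env 2 \<theta> e' x * mean_abs_pre [e] x * mean_abs_pre [e'] x + barrier_env 1 \<theta> e' x * mean_abs_pre [e, e'] x"])
    show "integrable (gauss d) (\<lambda>x. loss' (net \<theta>s x) (\<lambda>r. \<theta> r + t * e' r) e x)" if "\<bar>t\<bar> < 1" for t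
    proof (rule Bochner_Integration.integrable_bound)
      show "integrable (gauss d) (\<lambda>x. barrier_env 1 \<theta> e' x * mean_abs_pre [e] x)"
        using integrable_le_barrier_env_mean_abs_pre[OF R, where m=1 and wss="[[e]]"] by (simp add: integrable_le_def)
      show "AE x in gauss d. norm (loss' (net \<theta>s x) (\<lambda>r. \<theta> r + t * e' r) e x) \<le> norm (barrier_env 1 \<theta> e' x * mean_abs_pre [e] x)"
        using abs_loss'_le[OF net_between_0_1] that barrier_env_nonneg mean_abs_pre_nonneg
        by (auto intro!: AE_I2 simp: abs_mult)
    qed measurable
    show "integrable (gauss d)
        (\<lambda>x. barrier_env 2 \<theta> e' x * mean_abs_pre [e] x * mean_abs_pre [e'] x + barrier_env 1 \<theta> e' x * mean_abs_pre [e, e'] x)"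
      using integrable_le_barrier_env_mean_abs_pre[OF R, where m=2 and wss="[[e], [e']]"]
        integrable_le_barrier_env_mean_abs_pre[OF R, where m=1 and wss="[[e, e']]"]
      by (simp add: integrable_le_def mult.assoc)
    show "\<bar>loss'' (net \<theta>s x) (\<lambda>r. \<theta> r + t * e' r) e e' x\<bar>
        \<le> barrier_env 2 \<theta> e' x * mean_abs_pre [e] x * mean_abs_pre [e'] x + barrier_env 1 \<theta> e' x * mean_abs_pre [e, e'] x"
      if "\<bar>t\<bar> < 1" for t x
      using abs_loss''_le[OF net_between_0_1] that by simp
  qed (auto intro: DERIV_loss')
  then show ?thesis by simp
qed

lemma risk_eq_integral: "pop_risk d (net \<theta>s) (net \<theta>) = (\<integral>x. xent (net \<theta>s x) (net \<theta> x) \<partial>gauss d)"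
  unfolding pop_risk_def xent_loss_mixture ..

lemma hessian_risk:
  "hessian (\<lambda>\<theta>. pop_risk d (net \<theta>s) (net \<theta>)) W p q
    = (\<integral>x. loss'' (net \<theta>s x) W (coord p) (coord q) x \<partial>gauss d)"
proof -
  have "deriv (\<lambda>t. pop_risk d (net \<theta>s) (net (\<lambda>r. W r + s * coord q r + t * coord p r))) 0
      = (\<integral>x. loss' (net \<theta>s x) (\<lambda>r. W r + s * coord q r) (coord p) x \<partial>gauss d)" for s
    unfolding risk_eq_integral by (rule DERIV_imp_deriv[OF DERIV_risk])
  then show ?thesis unfolding hessian_def by (simp add: DERIV_imp_deriv[OF DERIV_risk'])
qed

end

section \<open>Lipschitz continuity of the Hessian\<close>

lemma spec_norm_le_of_bilinear_bound:
  fixes A :: "'a \<Rightarrow> 'a \<Rightarrow> real"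
  assumes "finite I" "I \<noteq> {}" "0 \<le> B"
    and bound: "\<And>z v. (\<Sum>q\<in>I. (z q)\<^sup>2) = 1 \<Longrightarrow> (\<Sum>q\<in>I. (v q)\<^sup>2) = 1 \<Longrightarrow>
       \<bar>\<Sum>p\<in>I. z p * (\<Sum>q\<in>I. A p q * v q)\<bar> \<le> B"
  shows "spec_norm I A \<le> B"
  unfolding spec_norm_def
proof (rule cSup_least)
  obtain p0 where p0: "p0 \<in> I" using assms(2) by auto
  have "(\<Sum>q\<in>I. (coord p0 q)\<^sup>2) = (\<Sum>q\<in>I. if q = p0 then 1 else 0)"
    unfolding coord_def by (rule sum.cong) auto
  also have "\<dots> = 1" using assms(1) p0 by simp
  finally show "{sqrt (\<Sum>p\<in>I. (\<Sum>q\<in>I. A p q * v q)\<^sup>2) |v. (\<Sum>q\<in>I. (v q)\<^sup>2) = 1} \<noteq> {}" by blast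
next
  fix y assume "y \<in> {sqrt (\<Sum>p\<in>I. (\<Sum>q\<in>I. A p q * v q)\<^sup>2) |v. (\<Sum>q\<in>I. (v q)\<^sup>2) = 1}"
  then obtain v where v: "(\<Sum>q\<in>I. (v q)\<^sup>2) = 1" and y: "y = sqrt (\<Sum>p\<in>I. (\<Sum>q\<in>I. A p q * v q)\<^sup>2)"
    by blast
  define w where "w p = (\<Sum>q\<in>I. A p q * v q)" for p
  define N where "N = sqrt (\<Sum>p\<in>I. (w p)\<^sup>2)"
  have "0 \<le> N" unfolding N_def by (auto intro!: sum_nonneg)
  show "y \<le> B"
  proof (cases "N = 0")
    case True
    then show ?thesis using y assms(3) unfolding N_def w_def by simp
  next
    case False
    with \<open>0 \<le> N\<close> have N_pos: "0 < N" by simp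
    have sum_w: "(\<Sum>p\<in>I. (w p)\<^sup>2) = N\<^sup>2" unfolding N_def by (simp add: sum_nonneg)
    \<comment> \<open>Testing against the unit vector \<open>w / N\<close> recovers the norm \<open>N\<close> of \<open>A v\<close>.\<close>
    define z where "z p = w p / N" for p
    have "(\<Sum>q\<in>I. (z q)\<^sup>2) = (\<Sum>q\<in>I. (w q)\<^sup>2) / N\<^sup>2"
      unfolding z_def by (simp add: power_divide sum_divide_distrib)
    then have z: "(\<Sum>q\<in>I. (z q)\<^sup>2) = 1" using sum_w N_pos by simp
    have "(\<Sum>p\<in>I. z p * w p) = (\<Sum>p\<in>I. (w p)\<^sup>2) / N"
      unfolding z_def by (simp add: sum_divide_distrib power2_eq_square)
    also have "\<dots> = N" using sum_w N_pos by (simp add: power2_eq_square)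
    finally have "N \<le> B" using bound[OF z v] unfolding w_def by simp
    then show ?thesis using y unfolding N_def w_def by simp
  qed
qed

text \<open>The factors \<open>128 = 2 * 4\<^sup>3\<close>, \<open>16 = 4\<^sup>2\<close> and \<open>12 = 3 * 4\<close> collect the numerical constants of the
  three groups of terms of the third directional derivative of the loss.\<close>

definition hessian_lip_const :: real where
  "hessian_lip_const = 128 * moment_const 3 1 2 3 + 16 * moment_const 2 1 2 3 + 12 * moment_const 1 1 2 4"

lemma hessian_lip_const_nonneg: "0 \<le> hessian_lip_const"
  unfolding hessian_lip_const_def using moment_const_nonneg by (auto intro!: add_nonneg_nonneg)

context sigmoid_net
begin

lemma weights_coord: "p \<in> I \<Longrightarrow> weights k (coord p) = M k p"
proof
  fix i assume "p \<in> I"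
  have "weights k (coord p) i = (\<Sum>r\<in>I. if r = p then M k r i else 0)"
    unfolding weights_def coord_def by (rule sum.cong) auto
  also have "\<dots> = M k p i" using \<open>p \<in> I\<close> finite_I by simp
  finally show "weights k (coord p) i = M k p i" .
qed

lemma pre_expand: "pre k z x = (\<Sum>p\<in>I. z p * pre k (coord p) x)"
proof -
  have "pre k z x = (\<Sum>i<d. \<Sum>p\<in>I. z p * M k p i * x i)"
    by (simp add: pre_def dotp_def weights_def sum_distrib_right)
  also have "\<dots> = (\<Sum>p\<in>I. \<Sum>i<d. z p * M k p i * x i)" by (rule sum.swap)
  also have "\<dots> = (\<Sum>p\<in>I. z p * pre k (coord p) x)"
    by (rule sum.cong[OF refl]) (simp add: weights_coord pre_def dotp_def sum_distrib_left mult_ac)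
  finally show ?thesis .
qed

lemma net'_expand: "net' \<theta> z x = (\<Sum>p\<in>I. z p * net' \<theta> (coord p) x)"
proof -
  have "net' \<theta> z x = (1 / real K) * (\<Sum>k<K. \<Sum>p\<in>I. z p * (sigmoid' (pre k \<theta> x) * pre k (coord p) x))"
    unfolding net'_def by (subst pre_expand) (simp add: sum_distrib_left mult_ac)
  also have "\<dots> = (\<Sum>p\<in>I. z p * net' \<theta> (coord p) x)"
    unfolding net'_def by (subst sum.swap) (simp add: sum_distrib_left mult_ac)
  finally show ?thesis .
qed

lemma net''_expand: "net'' \<theta> z v x = (\<Sum>p\<in>I. \<Sum>q\<in>I. z p * v q * net'' \<theta> (coord p) (coord q) x)"
proof -
  have "net'' \<theta> z v x = (1 / real K) *
      (\<Sum>k<K. \<Sum>p\<in>I. \<Sum>q\<in>I. z p * v q * (sigmoid'' (pre k \<theta> x) * pre k (coord p) x * pre k (coord q) x))"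
    unfolding net''_def by (subst (1 2) pre_expand) (simp add: sum_distrib_left sum_distrib_right mult_ac)
  also have "\<dots> = (1 / real K) *
      (\<Sum>p\<in>I. \<Sum>q\<in>I. \<Sum>k<K. z p * v q * (sigmoid'' (pre k \<theta> x) * pre k (coord p) x * pre k (coord q) x))"
    by (subst sum.swap, subst (2) sum.swap) simp
  also have "\<dots> = (\<Sum>p\<in>I. \<Sum>q\<in>I. z p * v q * net'' \<theta> (coord p) (coord q) x)"
    unfolding net''_def by (simp add: sum_distrib_left mult_ac)
  finally show ?thesis .
qed

lemma loss''_expand: "loss'' a \<theta> z v x = (\<Sum>p\<in>I. \<Sum>q\<in>I. z p * v q * loss'' a \<theta> (coord p) (coord q) x)"
proof -
  have "loss'' a \<theta> z v x
      = xent'' a (net \<theta> x) * (\<Sum>p\<in>I. z p * net' \<theta> (coord p) x) * (\<Sum>q\<in>I. v q * net' \<theta> (coord q) x)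
        + xent' a (net \<theta> x) * (\<Sum>p\<in>I. \<Sum>q\<in>I. z p * v q * net'' \<theta> (coord p) (coord q) x)"
    unfolding loss''_def by (subst (1 2) net'_expand, subst net''_expand) simp
  also have "\<dots> = (\<Sum>p\<in>I. \<Sum>q\<in>I. z p * v q * loss'' a \<theta> (coord p) (coord q) x)"
    unfolding loss''_def by (simp add: sum_distrib_left sum_distrib_right sum.distrib distrib_left mult_ac)
  finally show ?thesis .
qed

lemma integrable_loss'': "integrable (gauss d) (\<lambda>x. loss'' (net \<theta>s x) \<theta> z v x)"
proof -
  obtain R where R: "\<And>j. j < K \<Longrightarrow> sq_norm d (weights j \<theta>) \<le> R \<and> sq_norm d (weights j \<theta>) \<le> R"
    using weights_sq_norm_bounded by blast
  show ?thesis
  proof (rule Bochner_Integration.integrable_bound)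
    show "integrable (gauss d)
        (\<lambda>x. barrier_env 2 \<theta> \<theta> x * mean_abs_pre [z] x * mean_abs_pre [v] x + barrier_env 1 \<theta> \<theta> x * mean_abs_pre [z, v] x)"
      using integrable_le_barrier_env_mean_abs_pre[OF R, where m=2 and wss="[[z], [v]]"]
        integrable_le_barrier_env_mean_abs_pre[OF R, where m=1 and wss="[[z, v]]"]
      by (simp add: integrable_le_def mult.assoc)
    show "AE x in gauss d. norm (loss'' (net \<theta>s x) \<theta> z v x)
        \<le> norm (barrier_env 2 \<theta> \<theta> x * mean_abs_pre [z] x * mean_abs_pre [v] x + barrier_env 1 \<theta> \<theta> x * mean_abs_pre [z, v] x)"
      using abs_loss''_le[OF net_between_0_1, where t=0 and \<theta>=\<theta> and e=\<theta>] barrier_env_nonneg mean_abs_pre_nonneg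
      by (intro AE_I2) (simp add: add_nonneg_nonneg)
  qed measurable
qed

lemma hessian_bilinear_form:
  "(\<Sum>p\<in>I. z p * (\<Sum>q\<in>I. (hessian (\<lambda>\<theta>. pop_risk d (net \<theta>s) (net \<theta>)) W p q
        - hessian (\<lambda>\<theta>. pop_risk d (net \<theta>s) (net \<theta>)) W' p q) * v q))
   = (\<integral>x. loss'' (net \<theta>s x) W z v x \<partial>gauss d) - (\<integral>x. loss'' (net \<theta>s x) W' z v x \<partial>gauss d)"
proof -
  have "(\<integral>x. loss'' (net \<theta>s x) \<theta> z v x \<partial>gauss d)
      = (\<Sum>p\<in>I. \<Sum>q\<in>I. z p * v q * (\<integral>x. loss'' (net \<theta>s x) \<theta> (coord p) (coord q) x \<partial>gauss d))" for \<theta>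
    by (subst loss''_expand) (simp add: integrable_loss'')
  then show ?thesis unfolding hessian_risk
    by (simp add: sum_distrib_left sum_subtractf[symmetric] right_diff_distrib left_diff_distrib mult_ac)
qed

definition hess_dev_bound :: "('p \<Rightarrow> real) \<Rightarrow> ('p \<Rightarrow> real) \<Rightarrow> ('p \<Rightarrow> real) \<Rightarrow> real" where
  "hess_dev_bound z v \<Delta> = mean_wnorm [z] * mean_wnorm [v] * mean_wnorm [\<Delta>]
     + (mean_wnorm [z, \<Delta>] * mean_wnorm [v] + mean_wnorm [z] * mean_wnorm [v, \<Delta>] + mean_wnorm [\<Delta>] * mean_wnorm [z, v])
     + mean_wnorm [\<Delta>] * mean_wnorm [z, v, \<Delta>]"

lemma abs_loss''_diff_le:
  assumes "\<And>s. \<bar>s\<bar> \<le> 1 \<Longrightarrow> \<bar>loss''' (net \<theta>s x) (\<lambda>r. \<theta>s r + s * \<Delta> r) z v \<Delta> x\<bar> \<le> B"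
  shows "\<bar>loss'' (net \<theta>s x) (\<lambda>r. \<theta>s r + \<Delta> r) z v x - loss'' (net \<theta>s x) \<theta>s z v x\<bar> \<le> B"
proof -
  have "\<bar>loss'' (net \<theta>s x) (\<lambda>r. \<theta>s r + 1 * \<Delta> r) z v x - loss'' (net \<theta>s x) (\<lambda>r. \<theta>s r + 0 * \<Delta> r) z v x\<bar>
      \<le> B * \<bar>1\<bar>"
    by (rule abs_diff_le_deriv_bound[where f'="\<lambda>t. loss''' (net \<theta>s x) (\<lambda>r. \<theta>s r + t * \<Delta> r) z v \<Delta> x"])
      (use assms in \<open>auto intro: DERIV_loss''\<close>)
  then show ?thesis by simp
qed

lemma loss''_diff_integral_le:
  assumes R: "\<And>j. j < K \<Longrightarrow> sq_norm d (weights j \<theta>s) \<le> 1 \<and> sq_norm d (weights j \<Delta>) \<le> 1"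
  shows "\<bar>(\<integral>x. loss'' (net \<theta>s x) (\<lambda>r. \<theta>s r + \<Delta> r) z v x \<partial>gauss d) - (\<integral>x. loss'' (net \<theta>s x) \<theta>s z v x \<partial>gauss d)\<bar>
    \<le> hessian_lip_const * hess_dev_bound z v \<Delta>"
proof -
  let ?c = "\<lambda>m wss. 4 ^ m * moment_const (real m) 1 2 (sum_list (map length wss)) * (\<Prod>ws\<leftarrow>wss. mean_wnorm ws)"
  define B where "B x = 2 * (barrier_env 3 \<theta>s \<Delta> x * (\<Prod>ws\<leftarrow>[[z], [v], [\<Delta>]]. mean_abs_pre ws x))
      + (barrier_env 2 \<theta>s \<Delta> x * (\<Prod>ws\<leftarrow>[[z, \<Delta>], [v]]. mean_abs_pre ws x)
         + barrier_env 2 \<theta>s \<Delta> x * (\<Prod>ws\<leftarrow>[[z], [v, \<Delta>]]. mean_abs_pre ws x)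
         + barrier_env 2 \<theta>s \<Delta> x * (\<Prod>ws\<leftarrow>[[\<Delta>], [z, v]]. mean_abs_pre ws x))
      + 3 * (barrier_env 1 \<theta>s \<Delta> x * (\<Prod>ws\<leftarrow>[[\<Delta>], [z, v, \<Delta>]]. mean_abs_pre ws x))" for x
  have pointwise: "\<bar>loss'' (net \<theta>s x) (\<lambda>r. \<theta>s r + \<Delta> r) z v x - loss'' (net \<theta>s x) \<theta>s z v x\<bar> \<le> B x" for x
    by (rule abs_loss''_diff_le) (use abs_loss'''_le[of _ \<theta>s x \<Delta> z v] in \<open>simp add: B_def algebra_simps\<close>)
  have "integrable_le (gauss d) B
      (2 * ?c 3 [[z], [v], [\<Delta>]] + (?c 2 [[z, \<Delta>], [v]] + ?c 2 [[z], [v, \<Delta>]] + ?c 2 [[\<Delta>], [z, v]])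
        + 3 * ?c 1 [[\<Delta>], [z, v, \<Delta>]])"
    unfolding B_def[abs_def] by (intro integrable_le_add integrable_le_cmult integrable_le_barrier_env_mean_abs_pre R) auto
  moreover have "2 * ?c 3 [[z], [v], [\<Delta>]] + (?c 2 [[z, \<Delta>], [v]] + ?c 2 [[z], [v, \<Delta>]] + ?c 2 [[\<Delta>], [z, v]])
        + 3 * ?c 1 [[\<Delta>], [z, v, \<Delta>]] \<le> hessian_lip_const * hess_dev_bound z v \<Delta>"
  proof -
    let ?T1 = "mean_wnorm [z] * mean_wnorm [v] * mean_wnorm [\<Delta>]"
    let ?T2 = "mean_wnorm [z, \<Delta>] * mean_wnorm [v] + mean_wnorm [z] * mean_wnorm [v, \<Delta>] + mean_wnorm [\<Delta>] * mean_wnorm [z, v]"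
    let ?T3 = "mean_wnorm [\<Delta>] * mean_wnorm [z, v, \<Delta>]"
    have "2 * ?c 3 [[z], [v], [\<Delta>]] + (?c 2 [[z, \<Delta>], [v]] + ?c 2 [[z], [v, \<Delta>]] + ?c 2 [[\<Delta>], [z, v]])
        + 3 * ?c 1 [[\<Delta>], [z, v, \<Delta>]]
        = 128 * moment_const 3 1 2 3 * ?T1 + 16 * moment_const 2 1 2 3 * ?T2 + 12 * moment_const 1 1 2 4 * ?T3"
      by (simp add: numeral_eq_Suc algebra_simps)
    also have "\<dots> \<le> hessian_lip_const * (?T1 + ?T2 + ?T3)"
    proof -
      have "0 \<le> ?T1" "0 \<le> ?T2" "0 \<le> ?T3"
        by (simp_all add: mean_wnorm_nonneg add_nonneg_nonneg)
      moreover have "128 * moment_const 3 1 2 3 \<le> hessian_lip_const"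
        "16 * moment_const 2 1 2 3 \<le> hessian_lip_const" "12 * moment_const 1 1 2 4 \<le> hessian_lip_const"
        using moment_const_nonneg[of 3 1 2 3] moment_const_nonneg[of 2 1 2 3] moment_const_nonneg[of 1 1 2 4]
        unfolding hessian_lip_const_def by linarith+
      ultimately have "128 * moment_const 3 1 2 3 * ?T1 + 16 * moment_const 2 1 2 3 * ?T2
          + 12 * moment_const 1 1 2 4 * ?T3
          \<le> hessian_lip_const * ?T1 + hessian_lip_const * ?T2 + hessian_lip_const * ?T3"
        by (intro add_mono mult_right_mono) auto
      then show ?thesis by (simp only: distrib_left)
    qed
    finally show ?thesis unfolding hess_dev_bound_def .
  qed
  ultimately have B_bound: "integrable_le (gauss d) B (hessian_lip_const * hess_dev_bound z v \<Delta>)"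
    by (rule integrable_le_weaken)
  have "\<bar>(\<integral>x. loss'' (net \<theta>s x) (\<lambda>r. \<theta>s r + \<Delta> r) z v x \<partial>gauss d) - (\<integral>x. loss'' (net \<theta>s x) \<theta>s z v x \<partial>gauss d)\<bar>
      = \<bar>\<integral>x. loss'' (net \<theta>s x) (\<lambda>r. \<theta>s r + \<Delta> r) z v x - loss'' (net \<theta>s x) \<theta>s z v x \<partial>gauss d\<bar>"
    by (simp add: integrable_loss'')
  also have "\<dots> \<le> (\<integral>x. \<bar>loss'' (net \<theta>s x) (\<lambda>r. \<theta>s r + \<Delta> r) z v x - loss'' (net \<theta>s x) \<theta>s z v x\<bar> \<partial>gauss d)"
    by (rule integral_abs_bound)
  also have "\<dots> \<le> (\<integral>x. B x \<partial>gauss d)"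
    using B_bound pointwise unfolding integrable_le_def
    by (intro integral_mono') (auto intro: order_trans[OF abs_ge_zero])
  also have "\<dots> \<le> hessian_lip_const * hess_dev_bound z v \<Delta>"
    using B_bound unfolding integrable_le_def by simp
  finally show ?thesis .
qed

lemma spec_norm_hessian_diff_le:
  assumes "\<And>j. j < K \<Longrightarrow> sq_norm d (weights j \<theta>s) \<le> 1 \<and> sq_norm d (weights j (\<lambda>r. \<theta> r - \<theta>s r)) \<le> 1"
    and "I \<noteq> {}" "0 \<le> c"
    and "\<And>z v. (\<Sum>q\<in>I. (z q)\<^sup>2) = 1 \<Longrightarrow> (\<Sum>q\<in>I. (v q)\<^sup>2) = 1 \<Longrightarrow>
           hess_dev_bound z v (\<lambda>r. \<theta> r - \<theta>s r) \<le> c"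
  shows "spec_norm I (\<lambda>p q. hessian (\<lambda>\<theta>. pop_risk d (net \<theta>s) (net \<theta>)) \<theta> p q
                          - hessian (\<lambda>\<theta>. pop_risk d (net \<theta>s) (net \<theta>)) \<theta>s p q)
    \<le> hessian_lip_const * c"
proof (rule spec_norm_le_of_bilinear_bound[OF finite_I assms(2)])
  show "0 \<le> hessian_lip_const * c" using hessian_lip_const_nonneg assms(3) by simp
  fix z v :: "'p \<Rightarrow> real"
  assume "(\<Sum>q\<in>I. (z q)\<^sup>2) = 1" "(\<Sum>q\<in>I. (v q)\<^sup>2) = 1"
  have "(\<lambda>r. \<theta>s r + (\<theta> r - \<theta>s r)) = \<theta>" by auto
  then have "\<bar>\<Sum>p\<in>I. z p * (\<Sum>q\<in>I. (hessian (\<lambda>\<theta>. pop_risk d (net \<theta>s) (net \<theta>)) \<theta> p q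
        - hessian (\<lambda>\<theta>. pop_risk d (net \<theta>s) (net \<theta>)) \<theta>s p q) * v q)\<bar>
      \<le> hessian_lip_const * hess_dev_bound z v (\<lambda>r. \<theta> r - \<theta>s r)"
    using loss''_diff_integral_le[OF assms(1), of z v] unfolding hessian_bilinear_form by simp
  also have "\<dots> \<le> hessian_lip_const * c"
    using assms(4) \<open>(\<Sum>q\<in>I. (z q)\<^sup>2) = 1\<close> \<open>(\<Sum>q\<in>I. (v q)\<^sup>2) = 1\<close> hessian_lip_const_nonneg
    by (intro mult_left_mono) auto
  finally show "\<bar>\<Sum>p\<in>I. z p * (\<Sum>q\<in>I. (hessian (\<lambda>\<theta>. pop_risk d (net \<theta>s) (net \<theta>)) \<theta> p q
        - hessian (\<lambda>\<theta>. pop_risk d (net \<theta>s) (net \<theta>)) \<theta>s p q) * v q)\<bar> \<le> hessian_lip_const * c" .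
qed

lemma mean_wnorm_single_le: "mean_wnorm [w] \<le> sqrt ((\<Sum>k<K. (wnorm k w)\<^sup>2) / real K)"
proof (rule real_le_rsqrt)
  have "(\<Sum>k<K. wnorm k w)\<^sup>2 \<le> (\<Sum>k<K. (wnorm k w)\<^sup>2) * real K"
    using sum_squared_le_sum_of_squares[of "\<lambda>k. wnorm k w" "{..<K}"] by simp
  then have "(\<Sum>k<K. wnorm k w)\<^sup>2 / (real K)\<^sup>2 \<le> (\<Sum>k<K. (wnorm k w)\<^sup>2) * real K / (real K)\<^sup>2"
    by (rule divide_right_mono) simp
  then show "(mean_wnorm [w])\<^sup>2 \<le> (\<Sum>k<K. (wnorm k w)\<^sup>2) / real K"
    unfolding mean_wnorm_def using K_pos by (simp add: power_divide power2_eq_square)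
qed

lemma mean_wnorm_pair_le:
  "mean_wnorm [w, w'] \<le> sqrt (\<Sum>k<K. (wnorm k w)\<^sup>2) * sqrt (\<Sum>k<K. (wnorm k w')\<^sup>2) / real K"
proof -
  have "(\<Sum>k<K. wnorm k w * wnorm k w')\<^sup>2 \<le> (\<Sum>k<K. (wnorm k w)\<^sup>2) * (\<Sum>k<K. (wnorm k w')\<^sup>2)"
    by (rule Cauchy_Schwarz_ineq_sum)
  then have "(\<Sum>k<K. wnorm k w * wnorm k w') \<le> sqrt ((\<Sum>k<K. (wnorm k w)\<^sup>2) * (\<Sum>k<K. (wnorm k w')\<^sup>2))"
    by (rule real_le_rsqrt)
  then have "(\<Sum>k<K. wnorm k w * wnorm k w') \<le> sqrt (\<Sum>k<K. (wnorm k w)\<^sup>2) * sqrt (\<Sum>k<K. (wnorm k w')\<^sup>2)"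
    by (simp add: real_sqrt_mult)
  then show ?thesis unfolding mean_wnorm_def using K_pos by (simp add: divide_right_mono)
qed

lemma mean_wnorm_triple_le:
  assumes "\<And>k. k < K \<Longrightarrow> wnorm k w'' \<le> c"
  shows "mean_wnorm [w, w', w''] \<le> c * mean_wnorm [w, w']"
proof -
  have "(\<Sum>k<K. wnorm k w * (wnorm k w' * wnorm k w'')) \<le> (\<Sum>k<K. wnorm k w * (wnorm k w' * c))"
    using assms by (intro sum_mono mult_left_mono) (auto simp: wnorm_nonneg)
  then have "(1 / real K) * (\<Sum>k<K. wnorm k w * (wnorm k w' * wnorm k w''))
      \<le> (1 / real K) * (\<Sum>k<K. wnorm k w * (wnorm k w' * c))"
    by (rule mult_left_mono) simp
  moreover have "(1 / real K) * (\<Sum>k<K. wnorm k w * (wnorm k w' * c)) = c * mean_wnorm [w, w']"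
    unfolding mean_wnorm_def by (simp add: sum_distrib_left sum_distrib_right mult_ac)
  moreover have "mean_wnorm [w, w', w''] = (1 / real K) * (\<Sum>k<K. wnorm k w * (wnorm k w' * wnorm k w''))"
    unfolding mean_wnorm_def by simp
  ultimately show ?thesis by linarith
qed

lemma mean_wnorm_le_prod:
  assumes "\<And>k w. k < K \<Longrightarrow> w \<in> set ws \<Longrightarrow> wnorm k w \<le> c w"
  shows "mean_wnorm ws \<le> (\<Prod>w\<leftarrow>ws. c w)"
proof -
  have "(\<Prod>w\<leftarrow>ws. wnorm k w) \<le> (\<Prod>w\<leftarrow>ws. c w)" if "k < K" for k
    using assms[OF that]
  proof (induction ws)
    case (Cons w ws)
    then have "wnorm k w \<le> c w" "(\<Prod>u\<leftarrow>ws. wnorm k u) \<le> (\<Prod>u\<leftarrow>ws. c u)" by auto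
    moreover have "0 \<le> (\<Prod>u\<leftarrow>ws. wnorm k u)" by (rule prod_list_nonneg) (auto simp: wnorm_nonneg)
    moreover have "0 \<le> c w" using wnorm_nonneg[of k w] \<open>wnorm k w \<le> c w\<close> by linarith
    ultimately show ?case by (simp add: mult_mono)
  qed simp
  then have "(\<Sum>k<K. \<Prod>w\<leftarrow>ws. wnorm k w) \<le> real K * (\<Prod>w\<leftarrow>ws. c w)"
    using sum_mono[of "{..<K}" "\<lambda>k. \<Prod>w\<leftarrow>ws. wnorm k w" "\<lambda>_. \<Prod>w\<leftarrow>ws. c w"] by simp
  then show ?thesis unfolding mean_wnorm_def using K_pos by (simp add: field_simps)
qed

lemma hess_dev_bound_le:
  assumes "0 \<le> \<alpha>" "0 \<le> \<delta>" "\<delta> \<le> 1" "\<alpha>\<^sup>2 \<le> \<beta>"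
    and "mean_wnorm [z] \<le> \<alpha>" "mean_wnorm [v] \<le> \<alpha>" "mean_wnorm [\<Delta>] \<le> \<alpha> * \<delta>" "mean_wnorm [z, v] \<le> \<beta>"
    and "mean_wnorm [z, \<Delta>] \<le> \<beta> * \<delta>" "mean_wnorm [v, \<Delta>] \<le> \<beta> * \<delta>" "mean_wnorm [z, v, \<Delta>] \<le> \<beta> * \<delta>"
  shows "hess_dev_bound z v \<Delta> \<le> 5 * \<alpha> * \<beta> * \<delta>"
proof -
  note nonneg = mean_wnorm_nonneg
  have "0 \<le> \<beta>" using assms(4) by (metis order_trans zero_le_power2)
  have "mean_wnorm [z] * mean_wnorm [v] * mean_wnorm [\<Delta>] \<le> \<alpha> * \<alpha> * (\<alpha> * \<delta>)"
    using assms by (intro mult_mono) (simp_all add: nonneg)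
  also have "\<dots> \<le> \<beta> * (\<alpha> * \<delta>)"
    using assms by (intro mult_right_mono) (simp_all add: power2_eq_square)
  finally have T1: "mean_wnorm [z] * mean_wnorm [v] * mean_wnorm [\<Delta>] \<le> \<alpha> * \<beta> * \<delta>" by (simp add: mult_ac)
  have T2: "mean_wnorm [z, \<Delta>] * mean_wnorm [v] \<le> (\<beta> * \<delta>) * \<alpha>" "mean_wnorm [z] * mean_wnorm [v, \<Delta>] \<le> \<alpha> * (\<beta> * \<delta>)"
    "mean_wnorm [\<Delta>] * mean_wnorm [z, v] \<le> (\<alpha> * \<delta>) * \<beta>"
    using assms \<open>0 \<le> \<beta>\<close> by (intro mult_mono; simp add: nonneg)+
  have "mean_wnorm [\<Delta>] * mean_wnorm [z, v, \<Delta>] \<le> (\<alpha> * \<delta>) * (\<beta> * \<delta>)"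
    using assms \<open>0 \<le> \<beta>\<close> by (intro mult_mono) (simp_all add: nonneg)
  also have "\<dots> \<le> (\<alpha> * \<delta>) * \<beta>"
    using assms \<open>0 \<le> \<beta>\<close> by (intro mult_left_mono) (auto simp: mult_left_le)
  finally have T3: "mean_wnorm [\<Delta>] * mean_wnorm [z, v, \<Delta>] \<le> (\<alpha> * \<delta>) * \<beta>" .
  show ?thesis unfolding hess_dev_bound_def using T1 T2 T3 by (simp add: algebra_simps)
qed

end

context sigmoid_net
begin

lemma wnorm_le_of_sum_sq:
  assumes "(\<Sum>k<K. (wnorm k w)\<^sup>2) = (\<Sum>p\<in>I. (w p)\<^sup>2)" "k < K"
  shows "wnorm k w \<le> sqrt (\<Sum>p\<in>I. (w p)\<^sup>2)"
proof (rule real_le_rsqrt)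
  show "(wnorm k w)\<^sup>2 \<le> (\<Sum>p\<in>I. (w p)\<^sup>2)"
    unfolding assms(1)[symmetric] using assms(2) by (intro member_le_sum) auto
qed

lemma sq_norm_weights_eq: "sq_norm d (weights k w) = (wnorm k w)\<^sup>2"
  unfolding wnorm_def by simp

text \<open>If the units' weight vectors split the parameter orthogonally (fully connected network),
  Cauchy-Schwarz over the units gives the factor \<open>K\<^sup>-\<^sup>3\<^sup>/\<^sup>2\<close>.\<close>

lemma hess_dev_bound_le_orthogonal:
  assumes parseval: "\<And>w. (\<Sum>k<K. (wnorm k w)\<^sup>2) = (\<Sum>p\<in>I. (w p)\<^sup>2)"
    and z: "(\<Sum>q\<in>I. (z q)\<^sup>2) = 1" and v: "(\<Sum>q\<in>I. (v q)\<^sup>2) = 1"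
    and \<delta>: "\<delta> = sqrt (\<Sum>p\<in>I. (\<Delta> p)\<^sup>2)" "\<delta> \<le> 1"
  shows "hess_dev_bound z v \<Delta> \<le> 5 * sqrt (1 / real K) * (1 / real K) * \<delta>"
proof (rule hess_dev_bound_le)
  have "0 \<le> \<delta>" unfolding \<delta> by (simp add: sum_nonneg)
  then show "0 \<le> \<delta>" "\<delta> \<le> 1" using \<delta> by simp_all
  have sum_\<Delta>: "(\<Sum>p\<in>I. (\<Delta> p)\<^sup>2) = \<delta>\<^sup>2" unfolding \<delta> by (simp add: sum_nonneg)
  show "0 \<le> sqrt (1 / real K)" "(sqrt (1 / real K))\<^sup>2 \<le> 1 / real K" by simp_all
  show "mean_wnorm [z] \<le> sqrt (1 / real K)" "mean_wnorm [v] \<le> sqrt (1 / real K)"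
    using mean_wnorm_single_le[of z] mean_wnorm_single_le[of v] unfolding parseval z v by simp_all
  have "sqrt (\<delta>\<^sup>2 / real K) = sqrt (1 / real K) * \<delta>"
    using \<open>0 \<le> \<delta>\<close> by (simp add: real_sqrt_divide)
  then show "mean_wnorm [\<Delta>] \<le> sqrt (1 / real K) * \<delta>"
    using mean_wnorm_single_le[of \<Delta>] unfolding parseval sum_\<Delta> by simp
  show "mean_wnorm [z, v] \<le> 1 / real K"
    using mean_wnorm_pair_le[of z v] unfolding parseval z v by simp
  show "mean_wnorm [z, \<Delta>] \<le> 1 / real K * \<delta>" "mean_wnorm [v, \<Delta>] \<le> 1 / real K * \<delta>"
    using mean_wnorm_pair_le[of z \<Delta>] mean_wnorm_pair_le[of v \<Delta>] \<open>0 \<le> \<delta>\<close>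
    unfolding parseval z v sum_\<Delta> by simp_all
  have "wnorm k \<Delta> \<le> \<delta>" if "k < K" for k
    using wnorm_le_of_sum_sq[OF parseval that] unfolding \<delta>(1) .
  then have "mean_wnorm [z, v, \<Delta>] \<le> \<delta> * mean_wnorm [z, v]" by (rule mean_wnorm_triple_le)
  also have "\<dots> \<le> \<delta> * (1 / real K)"
    using mean_wnorm_pair_le[of z v] \<open>0 \<le> \<delta>\<close> unfolding parseval z v by (intro mult_left_mono) simp_all
  finally show "mean_wnorm [z, v, \<Delta>] \<le> 1 / real K * \<delta>" by (simp add: mult.commute)
qed

lemma spec_norm_hessian_diff_le_orthogonal:
  assumes parseval: "\<And>w. (\<Sum>k<K. (wnorm k w)\<^sup>2) = (\<Sum>p\<in>I. (w p)\<^sup>2)"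
    and "I \<noteq> {}" and \<theta>s: "\<And>k. k < K \<Longrightarrow> sq_norm d (weights k \<theta>s) \<le> 1"
    and \<delta>: "\<delta> = sqrt (\<Sum>p\<in>I. (\<theta> p - \<theta>s p)\<^sup>2)" "\<delta> \<le> 1"
  shows "spec_norm I (\<lambda>p q. hessian (\<lambda>\<theta>. pop_risk d (net \<theta>s) (net \<theta>)) \<theta> p q
                          - hessian (\<lambda>\<theta>. pop_risk d (net \<theta>s) (net \<theta>)) \<theta>s p q)
    \<le> 5 * hessian_lip_const / real K powr (3 / 2) * \<delta>"
proof -
  have "0 \<le> \<delta>" unfolding \<delta> by (simp add: sum_nonneg)
  have "spec_norm I (\<lambda>p q. hessian (\<lambda>\<theta>. pop_risk d (net \<theta>s) (net \<theta>)) \<theta> p q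
                          - hessian (\<lambda>\<theta>. pop_risk d (net \<theta>s) (net \<theta>)) \<theta>s p q)
      \<le> hessian_lip_const * (5 * sqrt (1 / real K) * (1 / real K) * \<delta>)"
  proof (rule spec_norm_hessian_diff_le)
    show "sq_norm d (weights j \<theta>s) \<le> 1 \<and> sq_norm d (weights j (\<lambda>r. \<theta> r - \<theta>s r)) \<le> 1" if "j < K" for j
    proof -
      have "wnorm j (\<lambda>r. \<theta> r - \<theta>s r) \<le> 1"
        using wnorm_le_of_sum_sq[OF parseval that, of "\<lambda>r. \<theta> r - \<theta>s r"] \<delta> by linarith
      then show ?thesis
        using \<theta>s[OF that] wnorm_nonneg[of j "\<lambda>r. \<theta> r - \<theta>s r"]
        unfolding sq_norm_weights_eq by (simp add: power_le_one)
    qed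
    show "0 \<le> 5 * sqrt (1 / real K) * (1 / real K) * \<delta>" using \<open>0 \<le> \<delta>\<close> by simp
  qed (use assms hess_dev_bound_le_orthogonal in auto)
  also have "hessian_lip_const * (5 * sqrt (1 / real K) * (1 / real K) * \<delta>)
      = 5 * hessian_lip_const / real K powr (3 / 2) * \<delta>"
  proof -
    have "real K powr (3 / 2) = real K powr (1 + 1 / 2)" by simp
    also have "\<dots> = real K powr 1 * real K powr (1 / 2)" by (rule powr_add)
    also have "\<dots> = real K * sqrt (real K)" using K_pos by (simp add: powr_half_sqrt)
    finally show ?thesis by (simp add: real_sqrt_divide mult.commute)
  qed
  finally show ?thesis .
qed

text \<open>If every unit sees the whole parameter (convolutional network with one shared filter), the
  averages over units give no gain.\<close>

lemma hess_dev_bound_le_shared: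
  assumes shared: "\<And>w k. k < K \<Longrightarrow> wnorm k w = sqrt (\<Sum>p\<in>I. (w p)\<^sup>2)"
    and z: "(\<Sum>q\<in>I. (z q)\<^sup>2) = 1" and v: "(\<Sum>q\<in>I. (v q)\<^sup>2) = 1"
    and \<delta>: "\<delta> = sqrt (\<Sum>p\<in>I. (\<Delta> p)\<^sup>2)" "\<delta> \<le> 1"
  shows "hess_dev_bound z v \<Delta> \<le> 5 * \<delta>"
proof -
  define c where "c w = sqrt (\<Sum>p\<in>I. (w p)\<^sup>2)" for w :: "'p \<Rightarrow> real"
  have "0 \<le> \<delta>" unfolding \<delta> by (simp add: sum_nonneg)
  have mean_wnorm_le: "mean_wnorm ws \<le> (\<Prod>w\<leftarrow>ws. c w)" for ws
    by (rule mean_wnorm_le_prod) (simp add: shared c_def)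
  have c: "c z = 1" "c v = 1" "c \<Delta> = \<delta>" unfolding c_def z v \<delta> by simp_all
  have "mean_wnorm [z] \<le> 1" "mean_wnorm [v] \<le> 1" "mean_wnorm [\<Delta>] \<le> 1 * \<delta>" "mean_wnorm [z, v] \<le> 1"
    "mean_wnorm [z, \<Delta>] \<le> 1 * \<delta>" "mean_wnorm [v, \<Delta>] \<le> 1 * \<delta>" "mean_wnorm [z, v, \<Delta>] \<le> 1 * \<delta>"
    using mean_wnorm_le[of "[z]"] mean_wnorm_le[of "[v]"] mean_wnorm_le[of "[\<Delta>]"] mean_wnorm_le[of "[z, v]"]
      mean_wnorm_le[of "[z, \<Delta>]"] mean_wnorm_le[of "[v, \<Delta>]"] mean_wnorm_le[of "[z, v, \<Delta>]"]
    by (simp_all add: c)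
  then have "hess_dev_bound z v \<Delta> \<le> 5 * 1 * 1 * \<delta>"
    by (intro hess_dev_bound_le) (use \<open>0 \<le> \<delta>\<close> \<delta>(2) in auto)
  then show ?thesis by simp
qed

lemma spec_norm_hessian_diff_le_shared:
  assumes shared: "\<And>w k. k < K \<Longrightarrow> wnorm k w = sqrt (\<Sum>p\<in>I. (w p)\<^sup>2)"
    and "I \<noteq> {}" and \<theta>s: "\<And>k. k < K \<Longrightarrow> sq_norm d (weights k \<theta>s) \<le> 1"
    and \<delta>: "\<delta> = sqrt (\<Sum>p\<in>I. (\<theta> p - \<theta>s p)\<^sup>2)" "\<delta> \<le> 1"
  shows "spec_norm I (\<lambda>p q. hessian (\<lambda>\<theta>. pop_risk d (net \<theta>s) (net \<theta>)) \<theta> p q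
                          - hessian (\<lambda>\<theta>. pop_risk d (net \<theta>s) (net \<theta>)) \<theta>s p q)
    \<le> 5 * hessian_lip_const * \<delta>"
proof -
  have "0 \<le> \<delta>" unfolding \<delta> by (simp add: sum_nonneg)
  have "spec_norm I (\<lambda>p q. hessian (\<lambda>\<theta>. pop_risk d (net \<theta>s) (net \<theta>)) \<theta> p q
                          - hessian (\<lambda>\<theta>. pop_risk d (net \<theta>s) (net \<theta>)) \<theta>s p q)
      \<le> hessian_lip_const * (5 * \<delta>)"
  proof (rule spec_norm_hessian_diff_le)
    show "sq_norm d (weights j \<theta>s) \<le> 1 \<and> sq_norm d (weights j (\<lambda>r. \<theta> r - \<theta>s r)) \<le> 1" if "j < K" for j
      using \<theta>s[OF that] shared[OF that, of "\<lambda>r. \<theta> r - \<theta>s r"] \<delta> \<open>0 \<le> \<delta>\<close>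
      unfolding sq_norm_weights_eq by (auto simp: power_le_one)
  qed (use assms hess_dev_bound_le_shared \<open>0 \<le> \<delta>\<close> in auto)
  then show ?thesis by (simp add: mult_ac)
qed

end

section \<open>Fully connected and convolutional networks\<close>

definition fcn_weight_map :: "nat \<Rightarrow> nat \<times> nat \<Rightarrow> nat \<Rightarrow> real" where
  "fcn_weight_map k p i = (if p = (i, k) then 1 else 0)"

definition cnn_weight_map :: "nat \<Rightarrow> nat \<Rightarrow> nat \<Rightarrow> nat \<Rightarrow> real" where
  "cnn_weight_map m k j i = (if i = m * k + j then 1 else 0)"

lemma sum_fcn_weight_map:
  "(\<Sum>p\<in>{..<d} \<times> {..<K}. W p * fcn_weight_map k p i) = (if i < d \<and> k < K then W (i, k) else 0)"
proof -
  have "(\<Sum>p\<in>{..<d} \<times> {..<K}. W p * fcn_weight_map k p i) = (\<Sum>p\<in>{..<d} \<times> {..<K}. if p = (i, k) then W p else 0)"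
    unfolding fcn_weight_map_def by (rule sum.cong) auto
  then show ?thesis by (simp add: sum.delta)
qed

lemma cnn_weight_map_patch: "j < m \<Longrightarrow> (\<Sum>j'<m. w j' * cnn_weight_map m k j' (m * k + j)) = w j"
proof -
  assume "j < m"
  have "(\<Sum>j'<m. w j' * cnn_weight_map m k j' (m * k + j)) = (\<Sum>j'<m. if j' = j then w j' else 0)"
    unfolding cnn_weight_map_def by (rule sum.cong) auto
  then show ?thesis using \<open>j < m\<close> by simp
qed

lemma sum_cnn_weight_map:
  assumes "k < K"
  shows "(\<Sum>i<m * K. (\<Sum>j<m. w j * cnn_weight_map m k j i) * g i) = (\<Sum>j<m. w j * g (m * k + j))"
proof -
  have patch: "m * k + j < m * K" if "j < m" for j
  proof -
    have "m * k + j < m * (k + 1)" using that by simp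
    also have "\<dots> \<le> m * K" using assms by (intro mult_le_mono2) auto
    finally show ?thesis .
  qed
  have "(\<Sum>i<m * K. (\<Sum>j<m. w j * cnn_weight_map m k j i) * g i)
      = (\<Sum>j<m. \<Sum>i<m * K. w j * (cnn_weight_map m k j i * g i))"
    by (subst sum.swap) (simp add: sum_distrib_right mult.assoc)
  also have "\<dots> = (\<Sum>j<m. w j * g (m * k + j))"
  proof (rule sum.cong[OF refl])
    fix j assume "j \<in> {..<m}"
    have "(\<Sum>i<m * K. cnn_weight_map m k j i * g i) = (\<Sum>i<m * K. if i = m * k + j then g i else 0)"
      unfolding cnn_weight_map_def by (rule sum.cong) auto
    also have "\<dots> = g (m * k + j)" using patch \<open>j \<in> {..<m}\<close> by simp
    finally show "(\<Sum>i<m * K. w j * (cnn_weight_map m k j i * g i)) = w j * g (m * k + j)"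
      by (simp add: sum_distrib_left[symmetric])
  qed
  finally show ?thesis .
qed

lemma fcn_hessian_lipschitz:
  fixes Wstar W :: "nat \<times> nat \<Rightarrow> real"
  assumes "d \<ge> 1" "K \<ge> 1"
    and Wstar: "\<forall>k<K. sqrt (\<Sum>i<d. (Wstar (i, k))\<^sup>2) \<le> 1"
    and W: "sqrt (\<Sum>i<d. \<Sum>k<K. (W (i, k) - Wstar (i, k))\<^sup>2) \<le> 0.7"
  shows "spec_norm ({..<d} \<times> {..<K})
      (\<lambda>p q. hessian (fcn_risk d K Wstar) W p q - hessian (fcn_risk d K Wstar) Wstar p q)
    \<le> 5 * hessian_lip_const / real K powr (3 / 2) * sqrt (\<Sum>i<d. \<Sum>k<K. (W (i, k) - Wstar (i, k))\<^sup>2)"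
proof -
  let ?I = "{..<d} \<times> {..<K}"
  interpret fcn: sigmoid_net d K ?I fcn_weight_map by unfold_locales (use assms in auto)
  have "fcn.net \<theta> = fcn_H d K \<theta>" for \<theta>
    unfolding fcn.net_def[abs_def] fcn_H_def[abs_def] fcn.pre_def dotp_def fcn.weights_def sum_fcn_weight_map
    by (auto intro!: sum.cong)
  then have risk: "fcn_risk d K Wstar = (\<lambda>\<theta>. pop_risk d (fcn.net Wstar) (fcn.net \<theta>))"
    unfolding fcn_risk_def[abs_def] by simp
  have sq_norm: "sq_norm d (fcn.weights k \<theta>) = (\<Sum>i<d. (\<theta> (i, k))\<^sup>2)" if "k < K" for k \<theta>
    unfolding sq_norm_def fcn.weights_def sum_fcn_weight_map using that by (intro sum.cong) auto
  have cart: "(\<Sum>p\<in>?I. (\<theta> p)\<^sup>2) = (\<Sum>i<d. \<Sum>k<K. (\<theta> (i, k))\<^sup>2)" for \<theta> :: "nat \<times> nat \<Rightarrow> real"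
    by (simp add: sum.cartesian_product)
  show ?thesis unfolding risk
  proof (rule fcn.spec_norm_hessian_diff_le_orthogonal)
    show "(\<Sum>k<K. (fcn.wnorm k w)\<^sup>2) = (\<Sum>p\<in>?I. (w p)\<^sup>2)" for w
    proof -
      have "(\<Sum>k<K. (fcn.wnorm k w)\<^sup>2) = (\<Sum>k<K. \<Sum>i<d. (w (i, k))\<^sup>2)"
        unfolding fcn.wnorm_def by (intro sum.cong refl) (simp add: sq_norm sum_nonneg)
      also have "\<dots> = (\<Sum>i<d. \<Sum>k<K. (w (i, k))\<^sup>2)" by (rule sum.swap)
      finally show ?thesis unfolding cart .
    qed
    have "(0, 0) \<in> ?I" using assms by auto
    then show "?I \<noteq> {}" by blast
    show "sq_norm d (fcn.weights k Wstar) \<le> 1" if "k < K" for k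
      using Wstar that by (simp add: sq_norm)
    show "sqrt (\<Sum>i<d. \<Sum>k<K. (W (i, k) - Wstar (i, k))\<^sup>2) = sqrt (\<Sum>p\<in>?I. (W p - Wstar p)\<^sup>2)"
      by (simp add: cart)
    show "sqrt (\<Sum>i<d. \<Sum>k<K. (W (i, k) - Wstar (i, k))\<^sup>2) \<le> 1" using W by linarith
  qed
qed

lemma cnn_hessian_lipschitz:
  fixes wstar w :: "nat \<Rightarrow> real"
  assumes "m \<ge> 1" "K \<ge> 1"
    and wstar: "sqrt (\<Sum>j<m. (wstar j)\<^sup>2) \<le> 1"
    and w: "sqrt (\<Sum>j<m. (w j - wstar j)\<^sup>2) \<le> 0.7"
  shows "spec_norm {..<m} (\<lambda>p q. hessian (cnn_risk m K wstar) w p q - hessian (cnn_risk m K wstar) wstar p q)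
    \<le> 5 * hessian_lip_const * sqrt (\<Sum>j<m. (w j - wstar j)\<^sup>2)"
proof -
  interpret cnn: sigmoid_net "m * K" K "{..<m}" "cnn_weight_map m" by unfold_locales (use assms in auto)
  have pre: "cnn.pre k \<theta> x = (\<Sum>j<m. \<theta> j * x (m * k + j))" if "k < K" for k \<theta> x
    unfolding cnn.pre_def dotp_def cnn.weights_def by (rule sum_cnn_weight_map[OF that])
  have "cnn.net \<theta> = cnn_H m K \<theta>" for \<theta>
  proof
    fix x
    show "cnn.net \<theta> x = cnn_H m K \<theta> x"
      unfolding cnn.net_def cnn_H_def
      by (intro arg_cong[where f="\<lambda>s. 1 / real K * s"] sum.cong refl) (simp add: pre)
  qed
  then have risk: "cnn_risk m K wstar = (\<lambda>\<theta>. pop_risk (m * K) (cnn.net wstar) (cnn.net \<theta>))"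
    unfolding cnn_risk_def[abs_def] by simp
  have sq_norm: "sq_norm (m * K) (cnn.weights k \<theta>) = (\<Sum>j<m. (\<theta> j)\<^sup>2)" if "k < K" for k \<theta>
    unfolding sq_norm_def power2_eq_square
    using sum_cnn_weight_map[OF that, where m=m and w=\<theta> and g="cnn.weights k \<theta>"]
    by (simp add: cnn.weights_def cnn_weight_map_patch)
  show ?thesis unfolding risk
  proof (rule cnn.spec_norm_hessian_diff_le_shared)
    show "cnn.wnorm k v = sqrt (\<Sum>p\<in>{..<m}. (v p)\<^sup>2)" if "k < K" for v k
      unfolding cnn.wnorm_def sq_norm[OF that] ..
    have "0 \<in> {..<m}" using assms by auto
    then show "{..<m} \<noteq> {}" by blast
    show "sq_norm (m * K) (cnn.weights k wstar) \<le> 1" if "k < K" for k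
      using wstar by (simp add: sq_norm[OF that])
    show "sqrt (\<Sum>j<m. (w j - wstar j)\<^sup>2) \<le> 1" using w by linarith
  qed simp
qed

theorem lemma1:
  shows "(\<exists>C1::real. \<forall>(d::nat) (K::nat) (Wstar::nat \<times> nat \<Rightarrow> real) (W::nat \<times> nat \<Rightarrow> real).
            d \<ge> 1 \<longrightarrow> K \<ge> 1 \<longrightarrow>
            (\<forall>k<K. sqrt (\<Sum>i<d. (Wstar (i, k))\<^sup>2) \<le> 1) \<longrightarrow>
            sqrt (\<Sum>i<d. \<Sum>k<K. (W (i, k) - Wstar (i, k))\<^sup>2) \<le> 0.7 \<longrightarrow>
            spec_norm ({..<d} \<times> {..<K})
              (\<lambda>p q. hessian (fcn_risk d K Wstar) W p q - hessian (fcn_risk d K Wstar) Wstar p q)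
            \<le> C1 / (real K powr (3/2)) * sqrt (\<Sum>i<d. \<Sum>k<K. (W (i, k) - Wstar (i, k))\<^sup>2))
       \<and> (\<exists>C2::real. \<forall>(m::nat) (K::nat) (wstar::nat \<Rightarrow> real) (w::nat \<Rightarrow> real).
            m \<ge> 1 \<longrightarrow> K \<ge> 1 \<longrightarrow>
            sqrt (\<Sum>j<m. (wstar j)\<^sup>2) \<le> 1 \<longrightarrow>
            sqrt (\<Sum>j<m. (w j - wstar j)\<^sup>2) \<le> 0.7 \<longrightarrow>
            spec_norm {..<m}
              (\<lambda>p q. hessian (cnn_risk m K wstar) w p q - hessian (cnn_risk m K wstar) wstar p q)
            \<le> C2 * real K * sqrt (\<Sum>j<m. (w j - wstar j)\<^sup>2))"
proof (intro conjI exI allI impI)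
  show "spec_norm ({..<d} \<times> {..<K})
          (\<lambda>p q. hessian (fcn_risk d K Wstar) W p q - hessian (fcn_risk d K Wstar) Wstar p q)
        \<le> 5 * hessian_lip_const / real K powr (3 / 2) * sqrt (\<Sum>i<d. \<Sum>k<K. (W (i, k) - Wstar (i, k))\<^sup>2)"
    if "d \<ge> 1" "K \<ge> 1" "\<forall>k<K. sqrt (\<Sum>i<d. (Wstar (i, k))\<^sup>2) \<le> 1"
      "sqrt (\<Sum>i<d. \<Sum>k<K. (W (i, k) - Wstar (i, k))\<^sup>2) \<le> 0.7"
    for d K Wstar W
    using fcn_hessian_lipschitz[OF that] .
  show "spec_norm {..<m} (\<lambda>p q. hessian (cnn_risk m K wstar) w p q - hessian (cnn_risk m K wstar) wstar p q)
        \<le> 5 * hessian_lip_const * real K * sqrt (\<Sum>j<m. (w j - wstar j)\<^sup>2)"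
    if "m \<ge> 1" "K \<ge> 1" "sqrt (\<Sum>j<m. (wstar j)\<^sup>2) \<le> 1" "sqrt (\<Sum>j<m. (w j - wstar j)\<^sup>2) \<le> 0.7"
    for m K wstar w
  proof -
    have "0 \<le> 5 * hessian_lip_const * sqrt (\<Sum>j<m. (w j - wstar j)\<^sup>2)"
      using hessian_lip_const_nonneg by (simp add: sum_nonneg)
    then have "5 * hessian_lip_const * sqrt (\<Sum>j<m. (w j - wstar j)\<^sup>2) * 1
        \<le> 5 * hessian_lip_const * sqrt (\<Sum>j<m. (w j - wstar j)\<^sup>2) * real K"
      using that(2) by (intro mult_left_mono) auto
    with cnn_hessian_lipschitz[OF that] show ?thesis by (simp add: mult_ac)
  qed
qed

end
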